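(* Assume $f_1$ is $C^3$, $f_2$ is $C^2$, $\frac{D}{\gamma_2\lambda_Z(D)}>f_2'(\lambda_Z(D))$, and let $\mu_{c_2}>\mu_{c_1}(D,D)$ be a zero of $A$. Then there exist $\hat\delta>0$, a neighborhood $\Delta$ of $(D,D)$ and a constant $C$ such that the factor coefficient $\gamma(D_1,D_2)(\mu)$ is defined and differentiable in $\mu$ for $\mu\in[\mu_{c_2}-\hat\delta,\mu_{c_2}+\hat\delta]$, $(D_1,D_2)\in\Delta$, and $$\Bigl|\frac{\partial}{\partial\mu}\gamma(D_1,D_2)(\mu)-A'(\mu)\Bigr|\le C\,\|(D_1,D_2)-(D,D)\|$$ for all such $\mu$ and $(D_1,D_2)$, where $\|\cdot\|$ is the Euclidean norm.
   Context: Let $D,\gamma_1,\gamma_2>0$ and $f_1,f_2:[0,\infty)\to[0,\infty)$ bounded, continuously differentiable, $f_i(0)=0$, $f_i'>0$, with $\lim f_1>d/\gamma_1$, $\lim f_2>d/\gamma_2$ for all $d$ in a neighborhood of $D$. Consider the system $N'=(\mu-N)D-Pf_1(N)$, $P'=\gamma_1Pf_1(N)-D_1P-Zf_2(P)$, $Z'=\gamma_2Zf_2(P)-D_2Z$ with $D_1,D_2>0$. $\lambda_P(d),\lambda_Z(d)$ are defined by $f_1(\lambda_P(d))=d/\gamma_1$, $f_2(\lambda_Z(d))=d/\gamma_2$; $\mu_{c_1}(D_1,D_2)=\lambda_P(D_1)+D_1\lambda_Z(D_2)/(D\gamma_1)$. For $\mu>\mu_{c_1}(D_1,D_2)$, $N(\mu,D_1,D_2)$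 is the unique $N\in(0,\mu)$ with $(\mu-N)D-\lambda_Z(D_2)f_1(N)=0$, $Z(\mu,D_1,D_2)=(\gamma_2/D_2)\lambda_Z(D_2)(\gamma_1f_1(N)-D_1)$, and $E_2(\mu,D_1,D_2)=(N,\lambda_Z(D_2),Z)$. For $D_1=D_2=D$ set $A(\mu)=Z(\mu,D,D)\bigl(\frac{D}{\gamma_2\lambda_Z(D)}-f_2'(\lambda_Z(D))\bigr)-\lambda_Z(D)f_1'(N(\mu,D,D))$. The characteristic polynomial $\det(J-xI)$ of the Jacobian $J$ of the system at $E_2(\mu,D_1,D_2)$ is $p_0+p_1x+p_2x^2-x^3$ with $p_i=p_i(\mu,D_1,D_2)$; for $(D_1,D_2)=(D,D)$ and $\mu$ near $\mu_{c_2}$ it equals $(-D-x)(\beta_0(\mu)-A(\mu)x+x^2)$ with $A(\mu)^2-4\beta_0(\mu)<0$. Let $M:(\alpha,\beta,\gamma)\mapsto(\alpha\beta,-\alpha\gamma-\beta,\alpha+\gamma)$ be the multiplication map sending $(\alpha-x,\ \beta-\gamma x+x^2)$ (with $\alpha<0$, $\gamma^2-4\beta<0$) to the coefficients of their product; it is a local diffeomorphism. For $(\mu,D_1,D_2)$ near $(\mu_{c_2},D,D)$ define $(\alpha(D_1,D_2)(\mu),\beta(D_1,D_2)(\mu),\gamma(D_1,D_2)(\mu))$ as the image of $(p_0,p_1,p_2)(\mu,D_1,D_2)$ under the local inverse of $M$ near $(-D,\beta_0(\mu_{c_2}),A(\mu_{c_2}))$; thus the characteristic polynomial factors as $(\alpha(D_1,D_2)(\mu)-x)(\beta(D_1,D_2)(\mu)-\gamma(D_1,D_2)(\mu)x+x^2)$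 and $\gamma(D,D)(\mu)=A(\mu)$. *)

theory Defs
  imports "HOL-Analysis.Analysis"
begin

text \<open>lambda_P(d) = lam f1 g1 d, lambda_Z(d) = lam f2 g2 d:
  the (unique, f strictly increasing) l >= 0 with f l = d / g.\<close>
definition lam :: "(real \<Rightarrow> real) \<Rightarrow> real \<Rightarrow> real \<Rightarrow> real" where
  "lam f g d = (THE l. 0 \<le> l \<and> f l = d / g)"

definition muc1 :: "(real \<Rightarrow> real) \<Rightarrow> (real \<Rightarrow> real) \<Rightarrow> real \<Rightarrow> real \<Rightarrow> real \<Rightarrow> real \<Rightarrow> real \<Rightarrow> real" where
  "muc1 f1 f2 g1 g2 D D1 D2 = lam f1 g1 D1 + D1 * lam f2 g2 D2 / (D * g1)"

definition Neq :: "(real \<Rightarrow> real) \<Rightarrow> (real \<Rightarrow> real) \<Rightarrow> real \<Rightarrow> real \<Rightarrow> real \<Rightarrow> real \<Rightarrow> real \<Rightarrow> real \<Rightarrow> real" where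
  "Neq f1 f2 g1 g2 D mu D1 D2 =
     (THE N. 0 < N \<and> N < mu \<and> (mu - N) * D - lam f2 g2 D2 * f1 N = 0)"

definition Zeq :: "(real \<Rightarrow> real) \<Rightarrow> (real \<Rightarrow> real) \<Rightarrow> real \<Rightarrow> real \<Rightarrow> real \<Rightarrow> real \<Rightarrow> real \<Rightarrow> real \<Rightarrow> real" where
  "Zeq f1 f2 g1 g2 D mu D1 D2 =
     (g2 / D2) * lam f2 g2 D2 * (g1 * f1 (Neq f1 f2 g1 g2 D mu D1 D2) - D1)"

definition E2 :: "(real \<Rightarrow> real) \<Rightarrow> (real \<Rightarrow> real) \<Rightarrow> real \<Rightarrow> real \<Rightarrow> real \<Rightarrow> real \<Rightarrow> real \<Rightarrow> real \<Rightarrow> real \<times> real \<times> real" where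
  "E2 f1 f2 g1 g2 D mu D1 D2 =
     (Neq f1 f2 g1 g2 D mu D1 D2, lam f2 g2 D2, Zeq f1 f2 g1 g2 D mu D1 D2)"

text \<open>Jacobian of the vector field
  N' = (mu - N) D - P f1(N),
  P' = g1 P f1(N) - D1 P - Z f2(P),
  Z' = g2 Z f2(P) - D2 Z
  at the point (N,P,Z); f1d, f2d are the derivatives of f1, f2.\<close>
definition Jac :: "(real \<Rightarrow> real) \<Rightarrow> (real \<Rightarrow> real) \<Rightarrow> (real \<Rightarrow> real) \<Rightarrow> (real \<Rightarrow> real)
     \<Rightarrow> real \<Rightarrow> real \<Rightarrow> real \<Rightarrow> real \<Rightarrow> real \<Rightarrow> real \<times> real \<times> real \<Rightarrow> real^3^3" where
  "Jac f1 f1d f2 f2d g1 g2 D D1 D2 E = (case E of (N, P, Z) \<Rightarrow>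
     vector [
       vector [- D - P * f1d N, - f1 N, 0],
       vector [g1 * P * f1d N, g1 * f1 N - D1 - Z * f2d P, - f2 P],
       vector [0, g2 * Z * f2d P, g2 * f2 P - D2]])"

definition charcoeffs :: "real^3^3 \<Rightarrow> real \<times> real \<times> real" where
  "charcoeffs J = (THE p. \<forall>x::real.
      det (J - x *\<^sub>R mat 1) = fst p + fst (snd p) * x + snd (snd p) * x ^ 2 - x ^ 3)"

definition multM :: "real \<times> real \<times> real \<Rightarrow> real \<times> real \<times> real" where
  "multM t = (case t of (a, b, c) \<Rightarrow> (a * b, - a * c - b, a + c))"

definition gamma_fac :: "real \<times> real \<times> real \<Rightarrow> real" where
  "gamma_fac p = (THE c. \<exists>a b. a < 0 \<and> c ^ 2 - 4 * b < 0 \<and> multM (a, b, c) = p)"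

definition gam :: "(real \<Rightarrow> real) \<Rightarrow> (real \<Rightarrow> real) \<Rightarrow> (real \<Rightarrow> real) \<Rightarrow> (real \<Rightarrow> real)
     \<Rightarrow> real \<Rightarrow> real \<Rightarrow> real \<Rightarrow> real \<Rightarrow> real \<Rightarrow> real \<Rightarrow> real" where
  "gam f1 f1d f2 f2d g1 g2 D D1 D2 mu =
     gamma_fac (charcoeffs (Jac f1 f1d f2 f2d g1 g2 D D1 D2 (E2 f1 f2 g1 g2 D mu D1 D2)))"

definition Afun :: "(real \<Rightarrow> real) \<Rightarrow> (real \<Rightarrow> real) \<Rightarrow> (real \<Rightarrow> real) \<Rightarrow> (real \<Rightarrow> real)
     \<Rightarrow> real \<Rightarrow> real \<Rightarrow> real \<Rightarrow> real \<Rightarrow> real" where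
  "Afun f1 f1d f2 f2d g1 g2 D mu =
     Zeq f1 f2 g1 g2 D mu D D * (D / (g2 * lam f2 g2 D) - f2d (lam f2 g2 D))
     - lam f2 g2 D * f1d (Neq f1 f2 g1 g2 D mu D D)"

end

theory Submission
  imports Defs
begin

text \<open>At \<open>D1 = D2 = D\<close> the characteristic polynomial at \<open>E2\<close> factors as
  \<open>(-D - x)(\<beta>\<^sub>0 - A x + x\<^sup>2)\<close>, and since \<open>A(\<mu>\<^sub>c\<^sub>2) = 0 < \<beta>\<^sub>0\<close> the quadratic factor has negative
  discriminant for \<open>\<mu>\<close> near \<open>\<mu>\<^sub>c\<^sub>2\<close>. The coefficients of the cubic and their \<open>\<mu>\<close>-derivatives
  depend Lipschitz-continuously on \<open>(D1, D2)\<close> at \<open>(D, D)\<close>, uniformly in \<open>\<mu>\<close> (this is where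
  \<open>f1 \<in> C\<^sup>3\<close> and \<open>f2 \<in> C\<^sup>2\<close> enter). Hence for \<open>(D1, D2)\<close> near \<open>(D, D)\<close> the cubic keeps a real
  root \<open>\<alpha>\<close> near \<open>-D\<close>, Lipschitz in \<open>(D1, D2)\<close>, and \<open>\<gamma> = p\<^sub>2 - \<alpha>\<close>. Implicit differentiation
  gives \<open>\<alpha>'\<close> as a rational expression in \<open>\<alpha>\<close> and the derivatives of the coefficients whose
  denominator, the quadratic factor at \<open>\<alpha>\<close>, stays bounded below; so \<open>\<partial>\<gamma>/\<partial>\<mu>\<close> is Lipschitz at
  \<open>(D, D)\<close>, where it equals \<open>A'\<close>.\<close>

section \<open>Factoring cubics\<close>

lemma cubic_coeffs_unique:
  fixes a0 a1 a2 b0 b1 b2 :: real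
  assumes "\<forall>x. a0 + a1 * x + a2 * x ^ 2 - x ^ 3 = b0 + b1 * x + b2 * x ^ 2 - x ^ 3"
  shows "a0 = b0 \<and> a1 = b1 \<and> a2 = b2"
proof -
  have "a0 = b0" using spec[OF assms, of 0] by simp
  moreover have "a0 + a1 + a2 = b0 + b1 + b2" using spec[OF assms, of 1] by simp
  moreover have "a0 - a1 + a2 = b0 - b1 + b2" using spec[OF assms, of "-1"] by simp
  ultimately show ?thesis by linarith
qed

lemma charcoeffs_eqI:
  assumes "\<forall>x. det (J - x *\<^sub>R mat 1) = p0 + p1 * x + p2 * x ^ 2 - x ^ 3"
  shows "charcoeffs J = (p0, p1, p2)"
  unfolding charcoeffs_def
proof (rule the_equality)
  fix p :: "real \<times> real \<times> real"
  assume "\<forall>x. det (J - x *\<^sub>R mat 1) = fst p + fst (snd p) * x + snd (snd p) * x\<^sup>2 - x ^ 3"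
  with assms have "\<forall>x. fst p + fst (snd p) * x + snd (snd p) * x\<^sup>2 - x ^ 3 = p0 + p1 * x + p2 * x ^ 2 - x ^ 3"
    by auto
  from cubic_coeffs_unique[OF this] show "p = (p0, p1, p2)" by (cases p) auto
qed (use assms in simp)

lemma det_Jac_minus_diag:
  "det (Jac f1 f1d f2 f2d g1 g2 D D1 D2 (N, P, Z) - x *\<^sub>R mat 1) =
   (let j11 = - D - P * f1d N; j12 = - f1 N; j21 = g1 * P * f1d N;
        j22 = g1 * f1 N - D1 - Z * f2d P; j23 = - f2 P; j32 = g2 * Z * f2d P; j33 = g2 * f2 P - D2
    in (j11 - x) * (j22 - x) * (j33 - x) - (j11 - x) * j23 * j32 - j12 * j21 * (j33 - x))"
  unfolding Jac_def by (simp add: det_3 mat_def Let_def algebra_simps)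

text \<open>The hypothesis, which holds at \<open>E2\<close>, makes the entry \<open>j33\<close> vanish.\<close>

lemma charcoeffs_Jac:
  assumes "g2 * f2 P = D2"
  shows "charcoeffs (Jac f1 f1d f2 f2d g1 g2 D D1 D2 (N, P, Z)) =
    (let j11 = - D - P * f1d N; j22 = g1 * f1 N - D1 - Z * f2d P;
         j23j32 = - D2 * Z * f2d P; j12j21 = - g1 * P * f1 N * f1d N
     in (- j11 * j23j32, - j11 * j22 + j23j32 + j12j21, j11 + j22))"
  unfolding Let_def
  by (rule charcoeffs_eqI, simp only: det_Jac_minus_diag Let_def)
     (use assms in \<open>auto simp: algebra_simps power2_eq_square power3_eq_cube\<close>)

lemma multM_poly:
  assumes "multM (a, b, c) = (p0, p1, p2)"
  shows "p0 + p1 * x + p2 * x ^ 2 - x ^ 3 = (a - x) * (b - c * x + x ^ 2)"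
proof -
  have "p0 = a * b" "p1 = - a * c - b" "p2 = a + c" using assms unfolding multM_def by auto
  then show ?thesis by (simp only:) (simp add: algebra_simps power2_eq_square power3_eq_cube)
qed

lemma quadratic_lower_bound:
  fixes b c y \<eta> :: real
  assumes "\<eta> \<le> 4 * b - c ^ 2"
  shows "\<eta> / 4 \<le> b - c * y + y ^ 2"
proof -
  have "b - c * y + y ^ 2 = (4 * b - c ^ 2) / 4 + (y - c / 2) ^ 2"
    by (simp add: power2_eq_square field_simps)
  moreover have "\<eta> / 4 \<le> (4 * b - c ^ 2) / 4" using assms by simp
  ultimately show ?thesis by (smt (verit) zero_le_power2)
qed

lemma multM_eq_imp_third_eq:
  assumes "multM (a, b, c) = multM (a', b', c')" "c ^ 2 - 4 * b < 0"
  shows "c = c'"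
proof -
  obtain p0 p1 p2 where p: "multM (a', b', c') = (p0, p1, p2)" by (metis prod_cases3)
  have "(a - a') * (b - c * a' + a' ^ 2) = (a' - a') * (b' - c' * a' + a' ^ 2)"
    using multM_poly[OF p] multM_poly[of a b c p0 p1 p2 a'] assms(1) p by simp
  moreover have "b - c * a' + a' ^ 2 > 0"
    using quadratic_lower_bound[of "4 * b - c ^ 2" b c a'] assms(2) by simp
  ultimately have "a = a'" by simp
  with assms(1) show ?thesis unfolding multM_def by auto
qed

lemma gamma_fac_eq:
  assumes "a < 0" "c ^ 2 - 4 * b < 0" "multM (a, b, c) = p"
  shows "gamma_fac p = c"
  unfolding gamma_fac_def
proof (rule the_equality)
  fix c' assume "\<exists>a' b'. a' < 0 \<and> c' ^ 2 - 4 * b' < 0 \<and> multM (a', b', c') = p"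
  then obtain a' b' where "c' ^ 2 - 4 * b' < 0" "multM (a', b', c') = p" by blast
  then show "c' = c" using multM_eq_imp_third_eq[of a' b' c' a b c] assms by simp
qed (use assms in blast)

text \<open>The real root \<open>a\<close> of a family of cubics \<open>(a - x)(b - c x + x\<^sup>2)\<close> whose quadratic factor
  is uniformly positive: evaluating the cubic at the fixed point \<open>a(x\<^sub>0)\<close> gives
  \<open>Q(x) = (a(x) - a(x\<^sub>0)) W(x)\<close> with \<open>W \<ge> \<eta>/4\<close>, so \<open>a\<close> inherits continuity and
  differentiability from \<open>Q\<close>.\<close>

lemma multM_root_isCont:
  fixes a b c u v w :: "real \<Rightarrow> real"
  assumes S: "open S" "x0 \<in> S"
    and fac: "\<forall>x\<in>S. multM (a x, b x, c x) = (u x, v x, w x)"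
    and disc: "\<forall>x\<in>S. \<eta> \<le> 4 * b x - (c x) ^ 2" and eta: "\<eta> > 0"
    and cont: "isCont u x0" "isCont v x0" "isCont w x0"
  shows "isCont a x0"
proof -
  define Q where "Q x = u x + v x * a x0 + w x * (a x0) ^ 2 - (a x0) ^ 3" for x
  have QW: "Q x = (a x - a x0) * (b x - c x * a x0 + (a x0) ^ 2)" if "x \<in> S" for x
    using multM_poly[of "a x" "b x" "c x" "u x" "v x" "w x" "a x0"] fac that unfolding Q_def by simp
  have bound: "norm (a x - a x0) \<le> 4 / \<eta> * \<bar>Q x\<bar>" if "x \<in> S" for x
  proof -
    have W: "\<eta> / 4 \<le> b x - c x * a x0 + (a x0) ^ 2"
      using quadratic_lower_bound[of \<eta> "b x" "c x" "a x0"] disc that by simp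
    then have "\<bar>a x - a x0\<bar> * (\<eta> / 4) \<le> \<bar>Q x\<bar>"
      unfolding QW[OF that] abs_mult using eta by (intro mult_left_mono) auto
    then show ?thesis using eta by (simp add: field_simps)
  qed
  have "isCont Q x0" unfolding Q_def by (intro continuous_intros cont)
  then have "(Q \<longlongrightarrow> 0) (at x0)" using QW[OF S(2)] by (simp add: isCont_def)
  then have "((\<lambda>x. 4 / \<eta> * \<bar>Q x\<bar>) \<longlongrightarrow> 0) (at x0)"
    by (intro tendsto_mult_right_zero tendsto_rabs_zero)
  with eventually_mono[OF eventually_at_in_open'[OF S] bound]
  have "((\<lambda>x. a x - a x0) \<longlongrightarrow> 0) (at x0)" by (rule Lim_null_comparison)
  then show ?thesis by (simp add: isCont_def LIM_zero_iff)
qed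

lemma multM_root_has_derivative:
  fixes a b c u v w :: "real \<Rightarrow> real"
  assumes S: "open S" "x0 \<in> S"
    and fac: "\<forall>x\<in>S. multM (a x, b x, c x) = (u x, v x, w x)"
    and disc: "\<forall>x\<in>S. \<eta> \<le> 4 * b x - (c x) ^ 2" and eta: "\<eta> > 0"
    and d0: "(u has_real_derivative u') (at x0)"
    and d1: "(v has_real_derivative v') (at x0)"
    and d2: "(w has_real_derivative w') (at x0)"
  shows "(a has_real_derivative
            (u' + v' * a x0 + w' * (a x0) ^ 2) / (b x0 - c x0 * a x0 + (a x0) ^ 2)) (at x0)"
proof -
  define Q where "Q x = u x + v x * a x0 + w x * (a x0) ^ 2 - (a x0) ^ 3" for x
  define W where "W x = b x - c x * a x0 + (a x0) ^ 2" for x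
  have QW: "Q x = (a x - a x0) * W x" if "x \<in> S" for x
    using multM_poly[of "a x" "b x" "c x" "u x" "v x" "w x" "a x0"] fac that unfolding Q_def W_def by simp
  have Wpos: "\<eta> / 4 \<le> W x" if "x \<in> S" for x
    using quadratic_lower_bound[of \<eta> "b x" "c x" "a x0"] disc that unfolding W_def by simp
  have dQ: "(Q has_real_derivative (u' + v' * a x0 + w' * (a x0) ^ 2)) (at x0)"
    unfolding Q_def by (auto intro!: derivative_eq_intros d0 d1 d2)
  have bc: "c x = w x - a x" "b x = - v x - a x * (w x - a x)" if "x \<in> S" for x
  proof -
    have "c x = w x - a x" "b x = - v x - a x * c x" using fac that unfolding multM_def by auto
    then show "c x = w x - a x" "b x = - v x - a x * (w x - a x)" by simp_all
  qed
  have "isCont a x0"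
    using multM_root_isCont[OF S fac disc eta DERIV_isCont[OF d0] DERIV_isCont[OF d1] DERIV_isCont[OF d2]] .
  then have cont: "isCont (\<lambda>x. - v x - a x * (w x - a x) - (w x - a x) * a x0 + (a x0) ^ 2) x0"
    using DERIV_isCont[OF d1] DERIV_isCont[OF d2] by (intro continuous_intros)
  have "\<forall>\<^sub>F x in nhds x0. - v x - a x * (w x - a x) - (w x - a x) * a x0 + (a x0) ^ 2 = W x"
    using eventually_nhds_in_open[OF S] by eventually_elim (simp add: W_def bc)
  with cont have "isCont W x0" by (simp add: isCont_cong)
  then have "((\<lambda>y. (Q y - Q x0) / (y - x0) / W y) \<longlongrightarrow> (u' + v' * a x0 + w' * (a x0) ^ 2) / W x0) (at x0)"
    using tendsto_divide[OF dQ[unfolded has_field_derivative_iff]] Wpos[OF S(2)] eta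
    by (simp add: isCont_def)
  moreover have "\<forall>\<^sub>F y in at x0. (Q y - Q x0) / (y - x0) / W y = (a y - a x0) / (y - x0)"
    using eventually_at_in_open'[OF S]
  proof eventually_elim
    case (elim y)
    then have "Q y - Q x0 = (a y - a x0) * W y" "W y \<noteq> 0"
      using QW[OF elim] QW[OF S(2)] Wpos[OF elim] eta by auto
    then show ?case by simp
  qed
  ultimately have "((\<lambda>y. (a y - a x0) / (y - x0)) \<longlongrightarrow> (u' + v' * a x0 + w' * (a x0) ^ 2) / W x0) (at x0)"
    by (rule Lim_transform_eventually)
  then show ?thesis unfolding has_field_derivative_iff W_def .
qed

section \<open>Lipschitz dependence on the dilution rates\<close>

text \<open>Lipschitz control relative to the base point \<open>(D, D)\<close> only, uniformly in a parameter: weaker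
  than Lipschitz continuity on the box, but all the final estimate needs, and closed under the
  arithmetic used below.\<close>

definition lipschitz_at_base :: "'a set \<Rightarrow> real \<Rightarrow> real \<Rightarrow> ('a \<Rightarrow> real \<Rightarrow> real \<Rightarrow> real) \<Rightarrow> bool" where
  "lipschitz_at_base I r D F \<longleftrightarrow> (\<exists>B C. \<forall>i\<in>I. \<forall>d1 d2. \<bar>d1 - D\<bar> \<le> r \<longrightarrow> \<bar>d2 - D\<bar> \<le> r \<longrightarrow>
      \<bar>F i d1 d2\<bar> \<le> B \<and> \<bar>F i d1 d2 - F i D D\<bar> \<le> C * (\<bar>d1 - D\<bar> + \<bar>d2 - D\<bar>))"

lemma lipschitz_at_baseI:
  assumes "\<And>i d1 d2. i \<in> I \<Longrightarrow> \<bar>d1 - D\<bar> \<le> r \<Longrightarrow> \<bar>d2 - D\<bar> \<le> r \<Longrightarrow>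
      \<bar>F i d1 d2\<bar> \<le> B \<and> \<bar>F i d1 d2 - F i D D\<bar> \<le> C * (\<bar>d1 - D\<bar> + \<bar>d2 - D\<bar>)"
  shows "lipschitz_at_base I r D F"
  unfolding lipschitz_at_base_def using assms by blast

lemma lipschitz_at_baseE:
  assumes "lipschitz_at_base I r D F"
  obtains B C where "0 \<le> B" "0 \<le> C"
    "\<And>i d1 d2. i \<in> I \<Longrightarrow> \<bar>d1 - D\<bar> \<le> r \<Longrightarrow> \<bar>d2 - D\<bar> \<le> r \<Longrightarrow> \<bar>F i d1 d2\<bar> \<le> B"
    "\<And>i d1 d2. i \<in> I \<Longrightarrow> \<bar>d1 - D\<bar> \<le> r \<Longrightarrow> \<bar>d2 - D\<bar> \<le> r \<Longrightarrow>
       \<bar>F i d1 d2 - F i D D\<bar> \<le> C * (\<bar>d1 - D\<bar> + \<bar>d2 - D\<bar>)"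
proof -
  obtain B C where h: "\<forall>i\<in>I. \<forall>d1 d2. \<bar>d1 - D\<bar> \<le> r \<longrightarrow> \<bar>d2 - D\<bar> \<le> r \<longrightarrow>
      \<bar>F i d1 d2\<bar> \<le> B \<and> \<bar>F i d1 d2 - F i D D\<bar> \<le> C * (\<bar>d1 - D\<bar> + \<bar>d2 - D\<bar>)"
    using assms unfolding lipschitz_at_base_def by blast
  show ?thesis
  proof (rule that[of "max B 0" "max C 0"])
    fix i d1 d2 assume "i \<in> I" "\<bar>d1 - D\<bar> \<le> r" "\<bar>d2 - D\<bar> \<le> r"
    then have "\<bar>F i d1 d2\<bar> \<le> B" "\<bar>F i d1 d2 - F i D D\<bar> \<le> C * (\<bar>d1 - D\<bar> + \<bar>d2 - D\<bar>)"
      using h by auto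
    then show "\<bar>F i d1 d2\<bar> \<le> max B 0"
      "\<bar>F i d1 d2 - F i D D\<bar> \<le> max C 0 * (\<bar>d1 - D\<bar> + \<bar>d2 - D\<bar>)"
      using mult_right_mono[of C "max C 0" "\<bar>d1 - D\<bar> + \<bar>d2 - D\<bar>"] by auto
  qed auto
qed

lemma lipschitz_at_base_mono:
  "lipschitz_at_base I r D F \<Longrightarrow> r' \<le> r \<Longrightarrow> lipschitz_at_base I r' D F"
  unfolding lipschitz_at_base_def by (meson order_trans)

lemma lipschitz_at_base_reindex:
  "lipschitz_at_base I r D F \<Longrightarrow> g ` J \<subseteq> I \<Longrightarrow> lipschitz_at_base J r D (\<lambda>j. F (g j))"
  unfolding lipschitz_at_base_def by blast

lemma lipschitz_at_base_subset:
  "lipschitz_at_base I r D F \<Longrightarrow> J \<subseteq> I \<Longrightarrow> lipschitz_at_base J r D F"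
  using lipschitz_at_base_reindex[of I r D F id J] by simp

lemma lipschitz_at_base_param:
  "(\<And>i. i \<in> I \<Longrightarrow> \<bar>G i\<bar> \<le> B) \<Longrightarrow> lipschitz_at_base I r D (\<lambda>i d1 d2. G i)"
  by (rule lipschitz_at_baseI[of _ _ _ _ B 0]) auto

lemma lipschitz_at_base_const: "lipschitz_at_base I r D (\<lambda>i d1 d2. k)"
  by (rule lipschitz_at_base_param[of _ _ "\<bar>k\<bar>"]) auto

lemma lipschitz_at_base_d1: "lipschitz_at_base I r D (\<lambda>i d1 d2. d1)"
  by (rule lipschitz_at_baseI[of _ _ _ _ "\<bar>D\<bar> + \<bar>r\<bar>" 1]) auto

lemma lipschitz_at_base_d2: "lipschitz_at_base I r D (\<lambda>i d1 d2. d2)"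
  by (rule lipschitz_at_baseI[of _ _ _ _ "\<bar>D\<bar> + \<bar>r\<bar>" 1]) auto

lemma lipschitz_at_base_add:
  assumes "lipschitz_at_base I r D F" "lipschitz_at_base I r D G"
  shows "lipschitz_at_base I r D (\<lambda>i d1 d2. F i d1 d2 + G i d1 d2)"
proof -
  obtain B1 C1 B2 C2 where F: "\<And>i d1 d2. i \<in> I \<Longrightarrow> \<bar>d1 - D\<bar> \<le> r \<Longrightarrow> \<bar>d2 - D\<bar> \<le> r \<Longrightarrow>
      \<bar>F i d1 d2\<bar> \<le> B1 \<and> \<bar>F i d1 d2 - F i D D\<bar> \<le> C1 * (\<bar>d1 - D\<bar> + \<bar>d2 - D\<bar>)"
    and G: "\<And>i d1 d2. i \<in> I \<Longrightarrow> \<bar>d1 - D\<bar> \<le> r \<Longrightarrow> \<bar>d2 - D\<bar> \<le> r \<Longrightarrow>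
      \<bar>G i d1 d2\<bar> \<le> B2 \<and> \<bar>G i d1 d2 - G i D D\<bar> \<le> C2 * (\<bar>d1 - D\<bar> + \<bar>d2 - D\<bar>)"
    using assms lipschitz_at_baseE by metis
  show ?thesis
  proof (rule lipschitz_at_baseI[of _ _ _ _ "B1 + B2" "C1 + C2"])
    fix i d1 d2 assume box: "i \<in> I" "\<bar>d1 - D\<bar> \<le> r" "\<bar>d2 - D\<bar> \<le> r"
    show "\<bar>F i d1 d2 + G i d1 d2\<bar> \<le> B1 + B2 \<and>
      \<bar>F i d1 d2 + G i d1 d2 - (F i D D + G i D D)\<bar> \<le> (C1 + C2) * (\<bar>d1 - D\<bar> + \<bar>d2 - D\<bar>)"
      using F[OF box] G[OF box] by (auto simp: distrib_right abs_le_iff)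
  qed
qed

lemma lipschitz_at_base_uminus:
  "lipschitz_at_base I r D F \<Longrightarrow> lipschitz_at_base I r D (\<lambda>i d1 d2. - F i d1 d2)"
  unfolding lipschitz_at_base_def by (metis abs_minus_cancel minus_diff_eq minus_diff_minus)

lemma lipschitz_at_base_diff:
  assumes "lipschitz_at_base I r D F" "lipschitz_at_base I r D G"
  shows "lipschitz_at_base I r D (\<lambda>i d1 d2. F i d1 d2 - G i d1 d2)"
  using lipschitz_at_base_add[OF assms(1) lipschitz_at_base_uminus[OF assms(2)]] by simp

lemma lipschitz_at_base_mult:
  assumes "lipschitz_at_base I r D F" "lipschitz_at_base I r D G"
  shows "lipschitz_at_base I r D (\<lambda>i d1 d2. F i d1 d2 * G i d1 d2)"
proof -
  obtain B1 C1 where "0 \<le> B1" and F: "\<And>i d1 d2. i \<in> I \<Longrightarrow> \<bar>d1 - D\<bar> \<le> r \<Longrightarrow> \<bar>d2 - D\<bar> \<le> r \<Longrightarrow>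
      \<bar>F i d1 d2\<bar> \<le> B1 \<and> \<bar>F i d1 d2 - F i D D\<bar> \<le> C1 * (\<bar>d1 - D\<bar> + \<bar>d2 - D\<bar>)"
    using lipschitz_at_baseE[OF assms(1)] by metis
  obtain B2 C2 where "0 \<le> B2" and G: "\<And>i d1 d2. i \<in> I \<Longrightarrow> \<bar>d1 - D\<bar> \<le> r \<Longrightarrow> \<bar>d2 - D\<bar> \<le> r \<Longrightarrow>
      \<bar>G i d1 d2\<bar> \<le> B2 \<and> \<bar>G i d1 d2 - G i D D\<bar> \<le> C2 * (\<bar>d1 - D\<bar> + \<bar>d2 - D\<bar>)"
    using lipschitz_at_baseE[OF assms(2)] by metis
  show ?thesis
  proof (rule lipschitz_at_baseI[of _ _ _ _ "B1 * B2" "B1 * C2 + B2 * C1"])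
    fix i d1 d2 assume box: "i \<in> I" "\<bar>d1 - D\<bar> \<le> r" "\<bar>d2 - D\<bar> \<le> r"
    then have base: "i \<in> I" "\<bar>D - D\<bar> \<le> r" "\<bar>D - D\<bar> \<le> r" by auto
    define \<rho> where "\<rho> = \<bar>d1 - D\<bar> + \<bar>d2 - D\<bar>"
    have "F i d1 d2 * G i d1 d2 - F i D D * G i D D
        = F i d1 d2 * (G i d1 d2 - G i D D) + G i D D * (F i d1 d2 - F i D D)"
      by (simp add: algebra_simps)
    then have "\<bar>F i d1 d2 * G i d1 d2 - F i D D * G i D D\<bar>
        \<le> \<bar>F i d1 d2\<bar> * \<bar>G i d1 d2 - G i D D\<bar> + \<bar>G i D D\<bar> * \<bar>F i d1 d2 - F i D D\<bar>"
      by (metis abs_mult abs_triangle_ineq)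
    also have "\<dots> \<le> B1 * (C2 * \<rho>) + B2 * (C1 * \<rho>)"
      using F[OF box] G[OF box] G[OF base] \<open>0 \<le> B1\<close> \<open>0 \<le> B2\<close> unfolding \<rho>_def
      by (intro add_mono mult_mono) auto
    finally show "\<bar>F i d1 d2 * G i d1 d2\<bar> \<le> B1 * B2 \<and>
       \<bar>F i d1 d2 * G i d1 d2 - F i D D * G i D D\<bar> \<le> (B1 * C2 + B2 * C1) * \<rho>"
      using F[OF box] G[OF box] unfolding abs_mult by (auto intro: mult_mono simp: algebra_simps)
  qed
qed

lemma lipschitz_at_base_power:
  "lipschitz_at_base I r D F \<Longrightarrow> lipschitz_at_base I r D (\<lambda>i d1 d2. (F i d1 d2) ^ n)"
  by (induction n) (simp_all add: lipschitz_at_base_const lipschitz_at_base_mult)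

lemma lipschitz_at_base_inverse:
  assumes "lipschitz_at_base I r D F" "0 < m"
    and lower: "\<And>i d1 d2. i \<in> I \<Longrightarrow> \<bar>d1 - D\<bar> \<le> r \<Longrightarrow> \<bar>d2 - D\<bar> \<le> r \<Longrightarrow> m \<le> \<bar>F i d1 d2\<bar>"
  shows "lipschitz_at_base I r D (\<lambda>i d1 d2. 1 / F i d1 d2)"
proof -
  obtain C where "0 \<le> C" and F: "\<And>i d1 d2. i \<in> I \<Longrightarrow> \<bar>d1 - D\<bar> \<le> r \<Longrightarrow> \<bar>d2 - D\<bar> \<le> r \<Longrightarrow>
      \<bar>F i d1 d2 - F i D D\<bar> \<le> C * (\<bar>d1 - D\<bar> + \<bar>d2 - D\<bar>)"
    using lipschitz_at_baseE[OF assms(1)] by metis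
  show ?thesis
  proof (rule lipschitz_at_baseI[of _ _ _ _ "1 / m" "C / (m * m)"])
    fix i d1 d2 assume box: "i \<in> I" "\<bar>d1 - D\<bar> \<le> r" "\<bar>d2 - D\<bar> \<le> r"
    then have base: "i \<in> I" "\<bar>D - D\<bar> \<le> r" "\<bar>D - D\<bar> \<le> r" by auto
    have l1: "m \<le> \<bar>F i d1 d2\<bar>" and l2: "m \<le> \<bar>F i D D\<bar>" using lower[OF box] lower[OF base] .
    have "\<bar>1 / F i d1 d2 - 1 / F i D D\<bar> = \<bar>F i d1 d2 - F i D D\<bar> / (\<bar>F i d1 d2\<bar> * \<bar>F i D D\<bar>)"
      using l1 l2 \<open>0 < m\<close> by (simp add: field_simps abs_divide abs_mult abs_minus_commute)
    also have "\<dots> \<le> C * (\<bar>d1 - D\<bar> + \<bar>d2 - D\<bar>) / (m * m)"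
      using F[OF box] l1 l2 \<open>0 \<le> C\<close> \<open>0 < m\<close> by (intro frac_le mult_mono) auto
    finally show "\<bar>1 / F i d1 d2\<bar> \<le> 1 / m \<and>
       \<bar>1 / F i d1 d2 - 1 / F i D D\<bar> \<le> C / (m * m) * (\<bar>d1 - D\<bar> + \<bar>d2 - D\<bar>)"
      using l1 \<open>0 < m\<close> by (simp add: abs_divide frac_le)
  qed
qed

lemma lipschitz_at_base_comp:
  assumes "lipschitz_at_base I r D F" "bounded (h ` T)" "L-lipschitz_on T h"
    and into: "\<And>i d1 d2. i \<in> I \<Longrightarrow> \<bar>d1 - D\<bar> \<le> r \<Longrightarrow> \<bar>d2 - D\<bar> \<le> r \<Longrightarrow> F i d1 d2 \<in> T"
  shows "lipschitz_at_base I r D (\<lambda>i d1 d2. h (F i d1 d2))"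
proof -
  obtain C where F: "\<And>i d1 d2. i \<in> I \<Longrightarrow> \<bar>d1 - D\<bar> \<le> r \<Longrightarrow> \<bar>d2 - D\<bar> \<le> r \<Longrightarrow>
      \<bar>F i d1 d2 - F i D D\<bar> \<le> C * (\<bar>d1 - D\<bar> + \<bar>d2 - D\<bar>)"
    using lipschitz_at_baseE[OF assms(1)] by metis
  obtain B where B: "\<And>x. x \<in> T \<Longrightarrow> \<bar>h x\<bar> \<le> B" using assms(2) unfolding bounded_iff by auto
  show ?thesis
  proof (rule lipschitz_at_baseI[of _ _ _ _ B "L * C"])
    fix i d1 d2 assume box: "i \<in> I" "\<bar>d1 - D\<bar> \<le> r" "\<bar>d2 - D\<bar> \<le> r"
    then have base: "i \<in> I" "\<bar>D - D\<bar> \<le> r" "\<bar>D - D\<bar> \<le> r" by auto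
    have "\<bar>h (F i d1 d2) - h (F i D D)\<bar> \<le> L * \<bar>F i d1 d2 - F i D D\<bar>"
      using lipschitz_onD[OF assms(3) into[OF box] into[OF base]] by (simp add: dist_real_def)
    also have "\<dots> \<le> L * (C * (\<bar>d1 - D\<bar> + \<bar>d2 - D\<bar>))"
      using F[OF box] lipschitz_on_nonneg[OF assms(3)] by (intro mult_left_mono)
    finally show "\<bar>h (F i d1 d2)\<bar> \<le> B \<and>
      \<bar>h (F i d1 d2) - h (F i D D)\<bar> \<le> L * C * (\<bar>d1 - D\<bar> + \<bar>d2 - D\<bar>)"
      using B[OF into[OF box]] by (simp add: mult.assoc)
  qed
qed

lemma lipschitz_at_base_close_to_base:
  assumes "lipschitz_at_base I r D F" "0 < r" "0 < \<epsilon>"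
  obtains r' where "0 < r'" "r' \<le> r"
    "\<And>i d1 d2. i \<in> I \<Longrightarrow> \<bar>d1 - D\<bar> \<le> r' \<Longrightarrow> \<bar>d2 - D\<bar> \<le> r' \<Longrightarrow> \<bar>F i d1 d2 - F i D D\<bar> < \<epsilon>"
proof -
  obtain C where "0 \<le> C" and F: "\<And>i d1 d2. i \<in> I \<Longrightarrow> \<bar>d1 - D\<bar> \<le> r \<Longrightarrow> \<bar>d2 - D\<bar> \<le> r \<Longrightarrow>
      \<bar>F i d1 d2 - F i D D\<bar> \<le> C * (\<bar>d1 - D\<bar> + \<bar>d2 - D\<bar>)"
    using lipschitz_at_baseE[OF assms(1)] by metis
  define r' where "r' = min r (\<epsilon> / (2 * C + 1))"
  show ?thesis
  proof (rule that[of r'])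
    show "0 < r'" "r' \<le> r" unfolding r'_def using assms \<open>0 \<le> C\<close> by auto
    fix i d1 d2 assume box: "i \<in> I" "\<bar>d1 - D\<bar> \<le> r'" "\<bar>d2 - D\<bar> \<le> r'"
    have "C * (\<bar>d1 - D\<bar> + \<bar>d2 - D\<bar>) \<le> C * (2 * (\<epsilon> / (2 * C + 1)))"
      using box \<open>0 \<le> C\<close> unfolding r'_def by (intro mult_left_mono) auto
    also have "\<dots> < \<epsilon>" using \<open>0 \<le> C\<close> assms(3) by (simp add: field_simps)
    moreover have "\<bar>F i d1 d2 - F i D D\<bar> \<le> C * (\<bar>d1 - D\<bar> + \<bar>d2 - D\<bar>)"
      using F[OF box(1)] box(2,3) \<open>r' \<le> r\<close> by auto
    ultimately show "\<bar>F i d1 d2 - F i D D\<bar> < \<epsilon>" by linarith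
  qed
qed

definition C1_lipschitz_at_base :: "real set \<Rightarrow> real \<Rightarrow> real \<Rightarrow> (real \<Rightarrow> real \<Rightarrow> real \<Rightarrow> real) \<Rightarrow> bool" where
  "C1_lipschitz_at_base I r D F \<longleftrightarrow> (\<exists>F'. lipschitz_at_base I r D F \<and> lipschitz_at_base I r D F' \<and>
     (\<forall>\<mu>\<in>I. \<forall>d1 d2. \<bar>d1 - D\<bar> \<le> r \<longrightarrow> \<bar>d2 - D\<bar> \<le> r \<longrightarrow>
        ((\<lambda>m. F m d1 d2) has_real_derivative F' \<mu> d1 d2) (at \<mu>)))"

lemma C1_lipschitz_at_baseI:
  assumes "lipschitz_at_base I r D F" "lipschitz_at_base I r D F'"
    and "\<And>\<mu> d1 d2. \<mu> \<in> I \<Longrightarrow> \<bar>d1 - D\<bar> \<le> r \<Longrightarrow> \<bar>d2 - D\<bar> \<le> r \<Longrightarrow>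
        ((\<lambda>m. F m d1 d2) has_real_derivative F' \<mu> d1 d2) (at \<mu>)"
  shows "C1_lipschitz_at_base I r D F"
  unfolding C1_lipschitz_at_base_def using assms by blast

lemma C1_lipschitz_at_baseE:
  assumes "C1_lipschitz_at_base I r D F"
  obtains F' where "lipschitz_at_base I r D F" "lipschitz_at_base I r D F'"
    "\<And>\<mu> d1 d2. \<mu> \<in> I \<Longrightarrow> \<bar>d1 - D\<bar> \<le> r \<Longrightarrow> \<bar>d2 - D\<bar> \<le> r \<Longrightarrow>
        ((\<lambda>m. F m d1 d2) has_real_derivative F' \<mu> d1 d2) (at \<mu>)"
  using assms unfolding C1_lipschitz_at_base_def by blast

lemma C1_lipschitz_at_base_subset:
  "C1_lipschitz_at_base I r D F \<Longrightarrow> J \<subseteq> I \<Longrightarrow> C1_lipschitz_at_base J r D F"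
  unfolding C1_lipschitz_at_base_def by (meson lipschitz_at_base_subset subsetD)

lemma C1_lipschitz_at_base_derivE:
  assumes "C1_lipschitz_at_base I r D F"
  obtains F' where "lipschitz_at_base I r D F'"
    "\<And>\<mu> d1 d2. \<mu> \<in> I \<Longrightarrow> \<bar>d1 - D\<bar> \<le> r \<Longrightarrow> \<bar>d2 - D\<bar> \<le> r \<Longrightarrow>
        ((\<lambda>m. F m d1 d2) has_real_derivative F' \<mu> d1 d2) (at \<mu>)"
  using assms unfolding C1_lipschitz_at_base_def by blast

lemma C1_lipschitz_at_base_imp_lipschitz_at_base:
  "C1_lipschitz_at_base I r D F \<Longrightarrow> lipschitz_at_base I r D F"
  unfolding C1_lipschitz_at_base_def by blast

lemma C1_lipschitz_at_base_mono:
  "C1_lipschitz_at_base I r D F \<Longrightarrow> r' \<le> r \<Longrightarrow> C1_lipschitz_at_base I r' D F"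
  unfolding C1_lipschitz_at_base_def by (meson lipschitz_at_base_mono order_trans)

lemma C1_lipschitz_at_base_isCont:
  assumes "C1_lipschitz_at_base I r D F" "\<mu> \<in> I" "\<bar>d1 - D\<bar> \<le> r" "\<bar>d2 - D\<bar> \<le> r"
  shows "isCont (\<lambda>m. F m d1 d2) \<mu>"
proof -
  obtain F' where "((\<lambda>m. F m d1 d2) has_real_derivative F' \<mu> d1 d2) (at \<mu>)"
    using assms unfolding C1_lipschitz_at_base_def by blast
  then show ?thesis by (rule DERIV_isCont)
qed

lemma C1_lipschitz_at_base_mu_indep:
  "lipschitz_at_base I r D (\<lambda>\<mu> d1 d2. G d1 d2) \<Longrightarrow> C1_lipschitz_at_base I r D (\<lambda>\<mu> d1 d2. G d1 d2)"
  by (rule C1_lipschitz_at_baseI[where F' = "\<lambda>\<mu> d1 d2. 0"]) (auto intro: lipschitz_at_base_const)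

lemma C1_lipschitz_at_base_add:
  assumes "C1_lipschitz_at_base I r D F" "C1_lipschitz_at_base I r D G"
  shows "C1_lipschitz_at_base I r D (\<lambda>\<mu> d1 d2. F \<mu> d1 d2 + G \<mu> d1 d2)"
proof -
  obtain F' G' where "lipschitz_at_base I r D F" "lipschitz_at_base I r D F'"
    "lipschitz_at_base I r D G" "lipschitz_at_base I r D G'"
    and "\<And>\<mu> d1 d2. \<mu> \<in> I \<Longrightarrow> \<bar>d1 - D\<bar> \<le> r \<Longrightarrow> \<bar>d2 - D\<bar> \<le> r \<Longrightarrow>
        ((\<lambda>m. F m d1 d2) has_real_derivative F' \<mu> d1 d2) (at \<mu>) \<and>
        ((\<lambda>m. G m d1 d2) has_real_derivative G' \<mu> d1 d2) (at \<mu>)"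
    using C1_lipschitz_at_baseE[OF assms(1)] C1_lipschitz_at_baseE[OF assms(2)] by metis
  then show ?thesis
    by (intro C1_lipschitz_at_baseI[where F' = "\<lambda>\<mu> d1 d2. F' \<mu> d1 d2 + G' \<mu> d1 d2"]
        lipschitz_at_base_add) (auto intro!: derivative_eq_intros)
qed

lemma C1_lipschitz_at_base_uminus:
  assumes "C1_lipschitz_at_base I r D F"
  shows "C1_lipschitz_at_base I r D (\<lambda>\<mu> d1 d2. - F \<mu> d1 d2)"
proof -
  obtain F' where "lipschitz_at_base I r D F" "lipschitz_at_base I r D F'"
    and "\<And>\<mu> d1 d2. \<mu> \<in> I \<Longrightarrow> \<bar>d1 - D\<bar> \<le> r \<Longrightarrow> \<bar>d2 - D\<bar> \<le> r \<Longrightarrow>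
        ((\<lambda>m. F m d1 d2) has_real_derivative F' \<mu> d1 d2) (at \<mu>)"
    using C1_lipschitz_at_baseE[OF assms] by metis
  then show ?thesis
    by (intro C1_lipschitz_at_baseI[where F' = "\<lambda>\<mu> d1 d2. - F' \<mu> d1 d2"]
        lipschitz_at_base_uminus) (auto intro!: derivative_eq_intros)
qed

lemma C1_lipschitz_at_base_diff:
  assumes "C1_lipschitz_at_base I r D F" "C1_lipschitz_at_base I r D G"
  shows "C1_lipschitz_at_base I r D (\<lambda>\<mu> d1 d2. F \<mu> d1 d2 - G \<mu> d1 d2)"
  using C1_lipschitz_at_base_add[OF assms(1) C1_lipschitz_at_base_uminus[OF assms(2)]] by simp

lemma C1_lipschitz_at_base_mult:
  assumes "C1_lipschitz_at_base I r D F" "C1_lipschitz_at_base I r D G"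
  shows "C1_lipschitz_at_base I r D (\<lambda>\<mu> d1 d2. F \<mu> d1 d2 * G \<mu> d1 d2)"
proof -
  obtain F' G' where "lipschitz_at_base I r D F" "lipschitz_at_base I r D F'"
    "lipschitz_at_base I r D G" "lipschitz_at_base I r D G'"
    and "\<And>\<mu> d1 d2. \<mu> \<in> I \<Longrightarrow> \<bar>d1 - D\<bar> \<le> r \<Longrightarrow> \<bar>d2 - D\<bar> \<le> r \<Longrightarrow>
        ((\<lambda>m. F m d1 d2) has_real_derivative F' \<mu> d1 d2) (at \<mu>) \<and>
        ((\<lambda>m. G m d1 d2) has_real_derivative G' \<mu> d1 d2) (at \<mu>)"
    using C1_lipschitz_at_baseE[OF assms(1)] C1_lipschitz_at_baseE[OF assms(2)] by metis
  then show ?thesis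
    by (intro C1_lipschitz_at_baseI
          [where F' = "\<lambda>\<mu> d1 d2. F' \<mu> d1 d2 * G \<mu> d1 d2 + F \<mu> d1 d2 * G' \<mu> d1 d2"]
          lipschitz_at_base_add lipschitz_at_base_mult)
       (auto intro!: derivative_eq_intros)
qed

lemma C1_lipschitz_at_base_comp:
  assumes "C1_lipschitz_at_base I r D F"
    and into: "\<And>\<mu> d1 d2. \<mu> \<in> I \<Longrightarrow> \<bar>d1 - D\<bar> \<le> r \<Longrightarrow> \<bar>d2 - D\<bar> \<le> r \<Longrightarrow> F \<mu> d1 d2 \<in> T"
    and h: "\<And>x. x \<in> T \<Longrightarrow> (h has_real_derivative h' x) (at x)"
    and "bounded (h ` T)" "L-lipschitz_on T h" "bounded (h' ` T)" "L'-lipschitz_on T h'"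
  shows "C1_lipschitz_at_base I r D (\<lambda>\<mu> d1 d2. h (F \<mu> d1 d2))"
proof -
  obtain F' where F: "lipschitz_at_base I r D F" "lipschitz_at_base I r D F'"
    and dF: "\<And>\<mu> d1 d2. \<mu> \<in> I \<Longrightarrow> \<bar>d1 - D\<bar> \<le> r \<Longrightarrow> \<bar>d2 - D\<bar> \<le> r \<Longrightarrow>
        ((\<lambda>m. F m d1 d2) has_real_derivative F' \<mu> d1 d2) (at \<mu>)"
    using C1_lipschitz_at_baseE[OF assms(1)] by metis
  show ?thesis
  proof (rule C1_lipschitz_at_baseI[where F' = "\<lambda>\<mu> d1 d2. h' (F \<mu> d1 d2) * F' \<mu> d1 d2"])
    show "lipschitz_at_base I r D (\<lambda>\<mu> d1 d2. h (F \<mu> d1 d2))"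
      using lipschitz_at_base_comp[OF F(1) assms(4,5) into] .
    show "lipschitz_at_base I r D (\<lambda>\<mu> d1 d2. h' (F \<mu> d1 d2) * F' \<mu> d1 d2)"
      using lipschitz_at_base_mult[OF lipschitz_at_base_comp[OF F(1) assms(6,7) into] F(2)] .
    fix \<mu> d1 d2 assume "\<mu> \<in> I" "\<bar>d1 - D\<bar> \<le> r" "\<bar>d2 - D\<bar> \<le> r"
    then show "((\<lambda>m. h (F m d1 d2)) has_real_derivative h' (F \<mu> d1 d2) * F' \<mu> d1 d2) (at \<mu>)"
      using DERIV_chain2[OF h dF] into by blast
  qed
qed

lemma has_real_derivative_at_of_within_nonneg:
  assumes "\<forall>x\<ge>0. (h has_real_derivative h' x) (at x within {0..})" "0 < x"
  shows "(h has_real_derivative h' x) (at x)"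
proof -
  have "x \<in> interior {0..}" "(h has_real_derivative h' x) (at x within {0..})"
    using assms by auto
  then show ?thesis using at_within_interior by metis
qed

lemma continuous_on_nonneg_of_deriv:
  "\<forall>x\<ge>0. (h has_real_derivative h' x) (at x within {0..}) \<Longrightarrow> continuous_on {0..} h"
  unfolding continuous_on_eq_continuous_within using DERIV_continuous by blast

lemma C1_on_nonneg_imp_bounded_lipschitz:
  fixes h h' :: "real \<Rightarrow> real"
  assumes "\<forall>x\<ge>0. (h has_real_derivative h' x) (at x within {0..})" "continuous_on {0..} h'" "0 \<le> lo"
  obtains L where "bounded (h ` {lo..hi})" "L-lipschitz_on {lo..hi} h"
proof -
  have sub: "{lo..hi} \<subseteq> {0..}" using assms(3) by auto
  have deriv: "(h has_real_derivative h' x) (at x within {lo..hi})" if "x \<in> {lo..hi}" for x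
    using DERIV_subset[OF _ sub] assms(1) that sub by blast
  have "continuous_on {lo..hi} h"
    unfolding continuous_on_eq_continuous_within using deriv DERIV_continuous by blast
  then have "bounded (h ` {lo..hi})" by (simp add: compact_continuous_image compact_imp_bounded)
  moreover obtain B where B: "\<And>x. x \<in> {lo..hi} \<Longrightarrow> \<bar>h' x\<bar> \<le> B"
    using compact_imp_bounded[OF compact_continuous_image[OF continuous_on_subset[OF assms(2) sub]]]
    unfolding bounded_iff by force
  have "(max B 0)-lipschitz_on {lo..hi} h"
  proof (rule lipschitz_onI)
    fix x y assume "x \<in> {lo..hi}" "y \<in> {lo..hi}"
    then have "\<bar>h x - h y\<bar> \<le> B * \<bar>x - y\<bar>"
      using field_differentiable_bound[of "{lo..hi}" h h' B x y] deriv B by auto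
    then show "dist (h x) (h y) \<le> max B 0 * dist x y"
      unfolding dist_real_def by (smt (verit) abs_ge_zero mult_right_mono)
  qed simp
  ultimately show ?thesis using that by blast
qed

lemma lipschitz_at_base_comp_C1:
  assumes "lipschitz_at_base I r D F" "0 \<le> lo"
    and into: "\<And>i d1 d2. i \<in> I \<Longrightarrow> \<bar>d1 - D\<bar> \<le> r \<Longrightarrow> \<bar>d2 - D\<bar> \<le> r \<Longrightarrow> F i d1 d2 \<in> {lo..hi}"
    and "\<forall>x\<ge>0. (h has_real_derivative h' x) (at x within {0..})" "continuous_on {0..} h'"
  shows "lipschitz_at_base I r D (\<lambda>i d1 d2. h (F i d1 d2))"
proof -
  obtain L where "bounded (h ` {lo..hi})" "L-lipschitz_on {lo..hi} h"
    using C1_on_nonneg_imp_bounded_lipschitz[OF assms(4,5,2)] .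
  then show ?thesis using lipschitz_at_base_comp[OF assms(1) _ _ into] by blast
qed

lemma C1_lipschitz_at_base_comp_C2:
  assumes "C1_lipschitz_at_base I r D F"
    and into: "\<And>\<mu> d1 d2. \<mu> \<in> I \<Longrightarrow> \<bar>d1 - D\<bar> \<le> r \<Longrightarrow> \<bar>d2 - D\<bar> \<le> r \<Longrightarrow> F \<mu> d1 d2 \<in> {0<..b}"
    and h: "\<forall>x\<ge>0. (h has_real_derivative h' x) (at x within {0..})"
    and h': "\<forall>x\<ge>0. (h' has_real_derivative h'' x) (at x within {0..})" "continuous_on {0..} h''"
  shows "C1_lipschitz_at_base I r D (\<lambda>\<mu> d1 d2. h (F \<mu> d1 d2))"
proof -
  have sub: "{0<..b} \<subseteq> {0..b}" by auto
  obtain L where "bounded (h ` {0..b})" "L-lipschitz_on {0..b} h"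
    using C1_on_nonneg_imp_bounded_lipschitz[OF h continuous_on_nonneg_of_deriv[OF h'(1)]] by blast
  moreover obtain L' where "bounded (h' ` {0..b})" "L'-lipschitz_on {0..b} h'"
    using C1_on_nonneg_imp_bounded_lipschitz[OF h'] by blast
  ultimately show ?thesis
    by (intro C1_lipschitz_at_base_comp[OF assms(1) into has_real_derivative_at_of_within_nonneg[OF h]]
        bounded_subset[OF _ image_mono[OF sub]] lipschitz_on_subset[OF _ sub]) auto
qed

section \<open>Response functions\<close>

locale response_function =
  fixes f fd :: "real \<Rightarrow> real"
  assumes f0: "f 0 = 0"
    and has_deriv: "\<forall>x\<ge>0. (f has_real_derivative fd x) (at x within {0..})"
    and deriv_pos: "\<forall>x\<ge>0. fd x > 0"
begin

lemma continuous: "continuous_on {0..} f"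
  using continuous_on_nonneg_of_deriv[OF has_deriv] .

lemma has_deriv_at: "0 < x \<Longrightarrow> (f has_real_derivative fd x) (at x)"
  using has_real_derivative_at_of_within_nonneg[OF has_deriv] .

lemma strict_mono:
  assumes "0 \<le> x" "x < y" shows "f x < f y"
proof (rule DERIV_pos_imp_increasing_open[OF assms(2)])
  fix z assume "x < z" "z < y"
  then have "0 < z" using assms(1) by linarith
  then show "\<exists>d. (f has_real_derivative d) (at z) \<and> 0 < d"
    using has_deriv_at[of z] deriv_pos by auto
next
  show "continuous_on {x..y} f" using continuous by (rule continuous_on_subset) (use assms in auto)
qed

lemma mono: "0 \<le> x \<Longrightarrow> x \<le> y \<Longrightarrow> f x \<le> f y"
  using strict_mono[of x y] by (cases "x = y") auto

lemma pos: "0 < x \<Longrightarrow> 0 < f x"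
  using strict_mono[of 0 x] f0 by simp

lemma lam_eqI: "0 \<le> l \<Longrightarrow> f l = d / g \<Longrightarrow> lam f g d = l"
  unfolding lam_def by (rule the_equality) (auto, metis linorder_neq_iff strict_mono)

lemma attains_value:
  assumes "(f \<longlongrightarrow> L) at_top" "0 < y" "y < L"
  obtains l where "0 < l" "f l = y"
proof -
  obtain X where X: "\<forall>x\<ge>X. y < f x"
    using order_tendstoD(1)[OF assms(1,3)] unfolding eventually_at_top_linorder by blast
  have "continuous_on {0..max X 0} f" using continuous by (rule continuous_on_subset) auto
  moreover have "f 0 \<le> y" "y \<le> f (max X 0)" using X[rule_format, of "max X 0"] f0 assms(2) by auto
  ultimately obtain l where "0 \<le> l" "f l = y" using IVT'[of f 0 y "max X 0"] by auto
  moreover have "l \<noteq> 0" using \<open>f l = y\<close> f0 assms(2) by auto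
  ultimately show ?thesis by (intro that[of l]) auto
qed

lemma lower_lipschitz:
  assumes "0 < a" "x \<in> {a..b}" "y \<in> {a..b}" "\<forall>t\<in>{a..b}. m \<le> fd t"
  shows "m * \<bar>x - y\<bar> \<le> \<bar>f x - f y\<bar>"
proof -
  have key: "m * (v - u) \<le> f v - f u" if "u \<in> {a..b}" "v \<in> {a..b}" "u \<le> v" for u v
  proof -
    have "f u - m * u \<le> f v - m * v"
    proof (rule DERIV_nonneg_imp_nondecreasing[OF \<open>u \<le> v\<close>])
      fix t assume "u \<le> t" "t \<le> v"
      then have "t \<in> {a..b}" "0 < t" using that assms(1) by auto
      then show "\<exists>y. ((\<lambda>t. f t - m * t) has_real_derivative y) (at t) \<and> 0 \<le> y"
        using assms(4) by (auto intro!: derivative_eq_intros has_deriv_at)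
    qed
    then show ?thesis by (simp add: algebra_simps)
  qed
  show ?thesis
  proof (cases "x \<le> y")
    case True
    then show ?thesis using key[OF assms(2,3)] mono[of x y] assms by (simp add: abs_minus_commute)
  next
    case False
    then show ?thesis using key[OF assms(3,2)] mono[of y x] assms by simp
  qed
qed

text \<open>\<open>N(\<mu>, D1, D2)\<close> is \<open>nutrient D \<mu> (\<lambda>\<^sub>Z(D2))\<close> for \<open>f = f1\<close>.\<close>

definition nutrient :: "real \<Rightarrow> real \<Rightarrow> real \<Rightarrow> real" where
  "nutrient D \<mu> p = (THE N. 0 < N \<and> N < \<mu> \<and> (\<mu> - N) * D - p * f N = 0)"

lemma nutrient_spec:
  assumes "0 < D" "0 < \<mu>" "0 < p"
  shows "0 < nutrient D \<mu> p \<and> nutrient D \<mu> p < \<mu> \<and> (\<mu> - nutrient D \<mu> p) * D - p * f (nutrient D \<mu> p) = 0"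
proof -
  define h where "h n = (\<mu> - n) * D - p * f n" for n
  have "continuous_on {0..\<mu>} h"
    unfolding h_def by (intro continuous_intros continuous_on_subset[OF continuous]) auto
  moreover have "h 0 > 0" "h \<mu> < 0" using assms f0 pos[of \<mu>] by (simp_all add: h_def)
  ultimately obtain n where n: "0 \<le> n" "n \<le> \<mu>" "h n = 0"
    using IVT2'[of h \<mu> 0 0] assms(2) by (meson less_imp_le)
  then have ex: "0 < n \<and> n < \<mu> \<and> (\<mu> - n) * D - p * f n = 0"
    using \<open>h 0 > 0\<close> \<open>h \<mu> < 0\<close> by (auto simp: h_def order.order_iff_strict)
  have "m = n" if "0 < m \<and> m < \<mu> \<and> (\<mu> - m) * D - p * f m = 0" for m
  proof (rule ccontr)
    assume "m \<noteq> n"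
    then consider "m < n" | "n < m" by linarith
    then show False
    proof cases
      case 1
      have "f m < f n" using strict_mono[of m n] that 1 by auto
      then have "p * f m < p * f n" using assms(3) by simp
      moreover have "(\<mu> - n) * D < (\<mu> - m) * D" using 1 assms(1) by simp
      ultimately show False using that ex by linarith
    next
      case 2
      have "f n < f m" using strict_mono[of n m] ex 2 by auto
      then have "p * f n < p * f m" using assms(3) by simp
      moreover have "(\<mu> - m) * D < (\<mu> - n) * D" using 2 assms(1) by simp
      ultimately show False using that ex by linarith
    qed
  qed
  then have "nutrient D \<mu> p = n" unfolding nutrient_def using ex by blast
  then show ?thesis using ex by simp
qed

text \<open>Monotonicity of \<open>f\<close> lets the two defining equations be subtracted without losing the sign.\<close>

lemma nutrient_diff_bound:
  assumes "0 < D" "0 < \<mu>" "0 < \<mu>'" "0 < p" "0 < p'"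
  shows "\<bar>nutrient D \<mu>' p' - nutrient D \<mu> p\<bar> * D \<le> \<bar>(\<mu>' - \<mu>) * D - (p' - p) * f (nutrient D \<mu> p)\<bar>"
proof -
  define n n' where "n = nutrient D \<mu> p" and "n' = nutrient D \<mu>' p'"
  have n: "0 < n" "(\<mu> - n) * D - p * f n = 0" and n': "0 < n'" "(\<mu>' - n') * D - p' * f n' = 0"
    using nutrient_spec[OF assms(1,2,4)] nutrient_spec[OF assms(1,3,5)] unfolding n_def n'_def by auto
  have key: "(n' - n) * D + p' * (f n' - f n) = (\<mu>' - \<mu>) * D - (p' - p) * f n"
    using n n' by (simp add: algebra_simps)
  have "0 \<le> (n' - n) * (f n' - f n)"
    using mono[of n n'] mono[of n' n] n n'
    by (cases "n \<le> n'") (auto intro: mult_nonneg_nonneg mult_nonpos_nonpos)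
  moreover have "((n' - n) * D) * (p' * (f n' - f n)) = (D * p') * ((n' - n) * (f n' - f n))"
    by (simp add: algebra_simps)
  ultimately have "0 \<le> ((n' - n) * D) * (p' * (f n' - f n))"
    using assms(1,5) by (metis mult_nonneg_nonneg less_imp_le)
  then have "\<bar>(n' - n) * D\<bar> \<le> \<bar>(n' - n) * D + p' * (f n' - f n)\<bar>"
    by (smt (verit) zero_le_mult_iff)
  then show ?thesis using key assms(1) unfolding n_def n'_def by (simp add: abs_mult)
qed

lemma nutrient_continuous:
  assumes "0 < D" "0 < \<mu>" "0 < p"
  shows "isCont (\<lambda>m. nutrient D m p) \<mu>"
proof -
  have "((\<lambda>m. nutrient D m p - nutrient D \<mu> p) \<longlongrightarrow> 0) (at \<mu>)"
  proof (rule Lim_null_comparison)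
    have "eventually (\<lambda>m. m \<in> {0<..}) (at \<mu>)" using assms(2) by (intro eventually_at_in_open') auto
    then show "eventually (\<lambda>m. norm (nutrient D m p - nutrient D \<mu> p) \<le> \<bar>m - \<mu>\<bar>) (at \<mu>)"
    proof (rule eventually_mono)
      fix m :: real assume "m \<in> {0<..}"
      then have "\<bar>nutrient D m p - nutrient D \<mu> p\<bar> * D \<le> \<bar>m - \<mu>\<bar> * D"
        using nutrient_diff_bound[of D \<mu> m p p] assms by (simp add: abs_mult)
      then show "norm (nutrient D m p - nutrient D \<mu> p) \<le> \<bar>m - \<mu>\<bar>" using assms(1) by simp
    qed
  qed (intro tendsto_eq_intros, auto)
  then show ?thesis by (simp add: isCont_def LIM_zero_iff)
qed

text \<open>Inverse function rule: \<open>\<mu> = N + p f(N) / D\<close>.\<close>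

lemma nutrient_has_derivative:
  assumes "0 < D" "0 < \<mu>" "0 < p"
  shows "((\<lambda>m. nutrient D m p) has_real_derivative D / (D + p * fd (nutrient D \<mu> p))) (at \<mu>)"
proof -
  define n where "n = nutrient D \<mu> p"
  have "0 < n" using nutrient_spec[OF assms] n_def by simp
  then have dphi: "((\<lambda>x. x + p * f x / D) has_real_derivative 1 + p * fd n / D) (at n)"
    using assms(1) by (auto intro!: derivative_eq_intros has_deriv_at)
  have "0 < fd n" using deriv_pos \<open>0 < n\<close> by simp
  then have "0 < p * fd n / D" using assms by simp
  moreover have "nutrient D y p + p * f (nutrient D y p) / D = y" if "0 < y" for y
    using nutrient_spec[OF assms(1) that assms(3)] assms(1) by (simp add: field_simps)
  ultimately have "((\<lambda>m. nutrient D m p) has_real_derivative inverse (1 + p * fd n / D)) (at \<mu>)"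
    using DERIV_inverse_function[where g = "\<lambda>m. nutrient D m p", OF dphi[unfolded n_def], of 0 "\<mu> + 1"]
      nutrient_continuous[OF assms] assms(2) unfolding n_def by fastforce
  moreover have "inverse (1 + p * fd n / D) = D / (D + p * fd n)"
    using assms(1) by (simp add: field_simps)
  ultimately show ?thesis by (simp add: n_def)
qed

lemma lam_props:
  assumes "(f \<longlongrightarrow> L) at_top" "0 < d" "0 < g" "d / g < L"
  shows "0 < lam f g d" "f (lam f g d) = d / g"
proof -
  obtain l where "0 < l" "f l = d / g" using attains_value[OF assms(1) _ assms(4)] assms(2,3) by auto
  moreover from this have "lam f g d = l" by (intro lam_eqI) auto
  ultimately show "0 < lam f g d" "f (lam f g d) = d / g" by auto
qed

text \<open>\<open>lam f g\<close> is the inverse of \<open>g f\<close>; near a point \<open>d0 = g f(l0)\<close> it is defined by the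
  intermediate value theorem and Lipschitz because \<open>fd\<close> is bounded below on \<open>[l0/2, 3 l0/2]\<close>.\<close>

lemma lam_near:
  assumes "continuous_on {0..} fd" "0 < g" "0 < l0" "f l0 = d0 / g"
  obtains r L where "0 < r"
    "\<And>d. \<bar>d - d0\<bar> \<le> r \<Longrightarrow> lam f g d \<in> {l0/2..3*l0/2} \<and> g * f (lam f g d) = d"
    "\<And>d. \<bar>d - d0\<bar> \<le> r \<Longrightarrow> \<bar>lam f g d - l0\<bar> \<le> L * \<bar>d - d0\<bar>"
proof -
  define lo hi where "lo = l0/2" and "hi = 3*l0/2"
  have lohi: "0 < lo" "lo < l0" "l0 < hi" using assms(3) unfolding lo_def hi_def by auto
  have "f lo < d0 / g" "d0 / g < f hi" using strict_mono[of lo l0] strict_mono[of l0 hi] lohi assms(4) by auto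
  define e where "e = min (d0 / g - f lo) (f hi - d0 / g)"
  have "0 < e" using \<open>f lo < d0 / g\<close> \<open>d0 / g < f hi\<close> unfolding e_def by simp
  obtain xm where xm: "xm \<in> {lo..hi}" "\<forall>y\<in>{lo..hi}. fd xm \<le> fd y"
    using continuous_attains_inf[of "{lo..hi}" fd] continuous_on_subset[OF assms(1)] lohi by auto
  have "0 < fd xm" using deriv_pos xm lohi by auto
  show ?thesis
  proof (rule that[of "g * e / 2" "1 / (g * fd xm)"])
    show "0 < g * e / 2" using \<open>0 < e\<close> assms(2) by simp
    fix d assume d: "\<bar>d - d0\<bar> \<le> g * e / 2"
    have "\<bar>d / g - d0 / g\<bar> = \<bar>d - d0\<bar> / g" using assms(2) by (simp add: diff_divide_distrib[symmetric])
    also have "\<dots> \<le> e / 2" using d assms(2) by (simp add: field_simps)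
    also have "\<dots> < e" using \<open>0 < e\<close> by simp
    finally have "f lo \<le> d / g" "d / g \<le> f hi" unfolding e_def by linarith+
    moreover have "continuous_on {lo..hi} f" using continuous by (rule continuous_on_subset) (use lohi in auto)
    ultimately obtain l where l: "lo \<le> l" "l \<le> hi" "f l = d / g"
      using IVT'[of f lo "d / g" hi] lohi by auto
    then have lam: "lam f g d = l" using lam_eqI lohi by simp
    show "lam f g d \<in> {l0/2..3*l0/2} \<and> g * f (lam f g d) = d"
      using l lam assms(2) unfolding lo_def hi_def by simp
    have "fd xm * \<bar>l - l0\<bar> \<le> \<bar>f l - f l0\<bar>"
      using lower_lipschitz[of lo l hi l0 "fd xm"] lohi l xm by auto
    also have "\<dots> = \<bar>d - d0\<bar> / g" using l assms(2,4) by (simp add: diff_divide_distrib[symmetric])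
    finally show "\<bar>lam f g d - l0\<bar> \<le> 1 / (g * fd xm) * \<bar>d - d0\<bar>"
      using lam \<open>0 < fd xm\<close> assms(2) by (simp add: field_simps)
  qed
qed

end

section \<open>The plankton model near \<open>(D, D)\<close>\<close>

locale plankton_model =
  fixes f1 f1d f1dd f1ddd f2 f2d f2dd :: "real \<Rightarrow> real"
    and D g1 g2 :: real
  assumes D_pos: "D > 0" and g1_pos: "g1 > 0" and g2_pos: "g2 > 0"
    and f1_0: "f1 0 = 0" and f2_0: "f2 0 = 0"
    and f1_deriv: "\<forall>x\<ge>0. (f1 has_real_derivative f1d x) (at x within {0..})"
    and f2_deriv: "\<forall>x\<ge>0. (f2 has_real_derivative f2d x) (at x within {0..})"
    and f1d_pos: "\<forall>x\<ge>0. f1d x > 0" and f2d_pos: "\<forall>x\<ge>0. f2d x > 0"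
    and f1_lim: "\<exists>L1. (f1 \<longlongrightarrow> L1) at_top \<and> (\<exists>e>0. \<forall>d. \<bar>d - D\<bar> < e \<longrightarrow> L1 > d / g1)"
    and f2_lim: "\<exists>L2. (f2 \<longlongrightarrow> L2) at_top \<and> (\<exists>e>0. \<forall>d. \<bar>d - D\<bar> < e \<longrightarrow> L2 > d / g2)"
    and f1_C3: "\<forall>x\<ge>0. (f1d has_real_derivative f1dd x) (at x within {0..})"
               "\<forall>x\<ge>0. (f1dd has_real_derivative f1ddd x) (at x within {0..})"
               "continuous_on {0..} f1ddd"
    and f2_C2: "\<forall>x\<ge>0. (f2d has_real_derivative f2dd x) (at x within {0..})"
               "continuous_on {0..} f2dd"

sublocale plankton_model \<subseteq> f1: response_function f1 f1d
  using f1_0 f1_deriv f1d_pos by unfold_locales auto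

sublocale plankton_model \<subseteq> f2: response_function f2 f2d
  using f2_0 f2_deriv f2d_pos by unfold_locales auto

context plankton_model
begin

abbreviation "P \<equiv> lam f2 g2"
abbreviation "N \<equiv> Neq f1 f2 g1 g2 D"
abbreviation "Z \<equiv> Zeq f1 f2 g1 g2 D"
abbreviation "A \<equiv> Afun f1 f1d f2 f2d g1 g2 D"

lemma lam_f1_D: "0 < lam f1 g1 D" "f1 (lam f1 g1 D) = D / g1"
  using f1_lim f1.lam_props[OF _ D_pos g1_pos] by auto

lemma P_D: "0 < P D" "f2 (P D) = D / g2"
  using f2_lim f2.lam_props[OF _ D_pos g2_pos] by auto

lemma P_near_D_exists:
  "\<exists>r>0. \<exists>L. \<forall>d2. \<bar>d2 - D\<bar> \<le> r \<longrightarrow> P d2 \<in> {P D/2..3 * P D/2} \<and> g2 * f2 (P d2) = d2 \<and>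
     \<bar>P d2 - P D\<bar> \<le> L * \<bar>d2 - D\<bar>"
proof -
  obtain r L where "0 < r"
    "\<And>d. \<bar>d - D\<bar> \<le> r \<Longrightarrow> P d \<in> {P D/2..3 * P D/2} \<and> g2 * f2 (P d) = d"
    "\<And>d. \<bar>d - D\<bar> \<le> r \<Longrightarrow> \<bar>P d - P D\<bar> \<le> L * \<bar>d - D\<bar>"
    using f2.lam_near[OF continuous_on_nonneg_of_deriv[OF f2_C2(1)] g2_pos P_D] by blast
  then show ?thesis by blast
qed

definition rZ :: real where
  "rZ = (SOME r. 0 < r \<and> (\<exists>L. \<forall>d2. \<bar>d2 - D\<bar> \<le> r \<longrightarrow> P d2 \<in> {P D/2..3 * P D/2} \<and>
     g2 * f2 (P d2) = d2 \<and> \<bar>P d2 - P D\<bar> \<le> L * \<bar>d2 - D\<bar>))"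

lemma rZ_spec:
  "0 < rZ"
  "\<And>d2. \<bar>d2 - D\<bar> \<le> rZ \<Longrightarrow> P d2 \<in> {P D/2..3 * P D/2} \<and> g2 * f2 (P d2) = d2"
  "\<exists>L. \<forall>d2. \<bar>d2 - D\<bar> \<le> rZ \<longrightarrow> \<bar>P d2 - P D\<bar> \<le> L * \<bar>d2 - D\<bar>"
  using someI_ex[OF P_near_D_exists] unfolding rZ_def[symmetric] by blast+

lemma P_lipschitz_near_D:
  obtains C where "0 \<le> C" "\<And>d2. \<bar>d2 - D\<bar> \<le> rZ \<Longrightarrow> \<bar>P d2 - P D\<bar> \<le> C * \<bar>d2 - D\<bar>"
proof -
  obtain L where L: "\<And>d2. \<bar>d2 - D\<bar> \<le> rZ \<Longrightarrow> \<bar>P d2 - P D\<bar> \<le> L * \<bar>d2 - D\<bar>" using rZ_spec(3) by blast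
  have "L * \<bar>d2 - D\<bar> \<le> max L 0 * \<bar>d2 - D\<bar>" for d2 by (intro mult_right_mono) auto
  with L show ?thesis using that[of "max L 0"] by (meson max.cobounded2 order_trans)
qed

lemma N_eq_nutrient: "N \<mu> d1 d2 = f1.nutrient D \<mu> (P d2)"
  unfolding Neq_def f1.nutrient_def ..

definition "j11 \<mu> d1 d2 = - D - P d2 * f1d (N \<mu> d1 d2)"
definition "j22 \<mu> d1 d2 = g1 * f1 (N \<mu> d1 d2) - d1 - Z \<mu> d1 d2 * f2d (P d2)"
definition "j23j32 \<mu> d1 d2 = - d2 * Z \<mu> d1 d2 * f2d (P d2)"
definition "j12j21 \<mu> d1 d2 = - g1 * P d2 * f1 (N \<mu> d1 d2) * f1d (N \<mu> d1 d2)"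
definition "p0 \<mu> d1 d2 = - j11 \<mu> d1 d2 * j23j32 \<mu> d1 d2"
definition "p1 \<mu> d1 d2 = - j11 \<mu> d1 d2 * j22 \<mu> d1 d2 + j23j32 \<mu> d1 d2 + j12j21 \<mu> d1 d2"
definition "p2 \<mu> d1 d2 = j11 \<mu> d1 d2 + j22 \<mu> d1 d2"

lemma charcoeffs_at_E2:
  assumes "\<bar>d2 - D\<bar> \<le> rZ"
  shows "charcoeffs (Jac f1 f1d f2 f2d g1 g2 D d1 d2 (E2 f1 f2 g1 g2 D \<mu> d1 d2))
           = (p0 \<mu> d1 d2, p1 \<mu> d1 d2, p2 \<mu> d1 d2)"
  unfolding E2_def using rZ_spec(2)[OF assms]
  by (subst charcoeffs_Jac) (auto simp: Let_def p0_def p1_def p2_def j11_def j22_def j23j32_def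
        j12j21_def algebra_simps)

context
  fixes a b r :: real
  assumes a_pos: "0 < a" and r_le_rZ: "r \<le> rZ" and r_le_D: "r \<le> D / 2"
begin

lemma P_in_box:
  assumes "\<bar>d2 - D\<bar> \<le> r" shows "P d2 \<in> {P D/2..3 * P D/2} \<and> 0 < P d2"
proof -
  have "P d2 \<in> {P D/2..3 * P D/2}" using rZ_spec(2)[of d2] assms r_le_rZ by auto
  then show ?thesis using P_D(1) by auto
qed

lemma N_in_box:
  assumes "\<mu> \<in> {a..b}" "\<bar>d2 - D\<bar> \<le> r"
  shows "0 < N \<mu> d1 d2 \<and> N \<mu> d1 d2 < \<mu> \<and> (\<mu> - N \<mu> d1 d2) * D - P d2 * f1 (N \<mu> d1 d2) = 0"
  unfolding N_eq_nutrient using f1.nutrient_spec[OF D_pos _ conjunct2[OF P_in_box]] assms a_pos by auto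

lemma N_in_Ioc: "\<mu> \<in> {a..b} \<Longrightarrow> \<bar>d2 - D\<bar> \<le> r \<Longrightarrow> N \<mu> d1 d2 \<in> {0<..b}"
  using N_in_box[of \<mu> d2 d1] by auto

lemma N_in_Icc: "\<mu> \<in> {a..b} \<Longrightarrow> \<bar>d2 - D\<bar> \<le> r \<Longrightarrow> N \<mu> d1 d2 \<in> {0..b}"
  using N_in_box[of \<mu> d2 d1] by auto

lemma lipschitz_at_base_P: "lipschitz_at_base I r D (\<lambda>\<mu> d1 d2. P d2)"
proof -
  obtain C where C: "0 \<le> C" "\<And>d2. \<bar>d2 - D\<bar> \<le> rZ \<Longrightarrow> \<bar>P d2 - P D\<bar> \<le> C * \<bar>d2 - D\<bar>"
    using P_lipschitz_near_D by blast
  show ?thesis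
  proof (rule lipschitz_at_baseI[of _ _ _ _ "3 * P D / 2" C])
    fix \<mu> d1 d2 assume "\<bar>d1 - D\<bar> \<le> r" "\<bar>d2 - D\<bar> \<le> r"
    moreover from this have "C * \<bar>d2 - D\<bar> \<le> C * (\<bar>d1 - D\<bar> + \<bar>d2 - D\<bar>)"
      using C(1) by (intro mult_left_mono) auto
    ultimately show "\<bar>P d2\<bar> \<le> 3 * P D / 2 \<and> \<bar>P d2 - P D\<bar> \<le> C * (\<bar>d1 - D\<bar> + \<bar>d2 - D\<bar>)"
      using C(2)[of d2] P_in_box[of d2] r_le_rZ by auto
  qed
qed

text \<open>Subtracting the equilibrium equations at \<open>d2\<close> and at \<open>D\<close> bounds the change of \<open>N\<close> by
  that of \<open>P\<close>, times \<open>f1(N) \<le> f1(b)\<close>.\<close>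

lemma lipschitz_at_base_N: "lipschitz_at_base {a..b} r D N"
proof -
  obtain C where C: "0 \<le> C" "\<And>d2. \<bar>d2 - D\<bar> \<le> rZ \<Longrightarrow> \<bar>P d2 - P D\<bar> \<le> C * \<bar>d2 - D\<bar>"
    using P_lipschitz_near_D by blast
  show ?thesis
  proof (rule lipschitz_at_baseI[of _ _ _ _ b "C * f1 b / D"])
    fix \<mu> d1 d2 assume box: "\<mu> \<in> {a..b}" "\<bar>d1 - D\<bar> \<le> r" "\<bar>d2 - D\<bar> \<le> r"
    then have base: "\<bar>D - D\<bar> \<le> r" by simp
    have N: "0 < N \<mu> d1 d2" "N \<mu> d1 d2 < \<mu>" "0 < N \<mu> D D" "N \<mu> D D < \<mu>"
      using N_in_box[OF box(1,3)] N_in_box[OF box(1) base] by auto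
    have "\<bar>N \<mu> d1 d2 - N \<mu> D D\<bar> * D \<le> \<bar>(\<mu> - \<mu>) * D - (P d2 - P D) * f1 (N \<mu> D D)\<bar>"
      unfolding N_eq_nutrient
      using f1.nutrient_diff_bound[OF D_pos _ _ conjunct2[OF P_in_box[OF base]]
          conjunct2[OF P_in_box[OF box(3)]], of \<mu> \<mu>] box(1) a_pos by auto
    also have "\<dots> = \<bar>P d2 - P D\<bar> * f1 (N \<mu> D D)"
      using f1.pos[of "N \<mu> D D"] N by (simp add: abs_mult)
    also have "\<dots> \<le> C * \<bar>d2 - D\<bar> * f1 b"
      using C box r_le_rZ f1.mono[of "N \<mu> D D" b] f1.pos[of "N \<mu> D D"] N by (intro mult_mono) auto
    also have "\<dots> = C * f1 b * \<bar>d2 - D\<bar>" by simp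
    also have "\<dots> \<le> C * f1 b * (\<bar>d1 - D\<bar> + \<bar>d2 - D\<bar>)"
      using C(1) f1.pos[of b] N box by (intro mult_left_mono) auto
    finally show "\<bar>N \<mu> d1 d2\<bar> \<le> b \<and> \<bar>N \<mu> d1 d2 - N \<mu> D D\<bar> \<le> C * f1 b / D * (\<bar>d1 - D\<bar> + \<bar>d2 - D\<bar>)"
      using N box D_pos by (simp add: field_simps)
  qed
qed

lemma C1_lipschitz_at_base_N: "C1_lipschitz_at_base {a..b} r D N"
proof (rule C1_lipschitz_at_baseI[OF lipschitz_at_base_N])
  show "lipschitz_at_base {a..b} r D (\<lambda>\<mu> d1 d2. D * (1 / (D + P d2 * f1d (N \<mu> d1 d2))))"
  proof (intro lipschitz_at_base_mult lipschitz_at_base_const lipschitz_at_base_inverse[of _ _ _ _ D])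
    show "lipschitz_at_base {a..b} r D (\<lambda>\<mu> d1 d2. D + P d2 * f1d (N \<mu> d1 d2))"
      by (intro lipschitz_at_base_add lipschitz_at_base_mult lipschitz_at_base_const lipschitz_at_base_P
          lipschitz_at_base_comp_C1[OF lipschitz_at_base_N order_refl _ f1_C3(1)]
          continuous_on_nonneg_of_deriv[OF f1_C3(2)])
        (use N_in_Icc in auto)
    fix \<mu> d1 d2 assume "\<mu> \<in> {a..b}" "\<bar>d1 - D\<bar> \<le> r" "\<bar>d2 - D\<bar> \<le> r"
    then have "0 < P d2" "0 < f1d (N \<mu> d1 d2)"
      using P_in_box[of d2] N_in_box[of \<mu> d2 d1] f1d_pos by auto
    then have "0 < P d2 * f1d (N \<mu> d1 d2)" by simp
    then show "D \<le> \<bar>D + P d2 * f1d (N \<mu> d1 d2)\<bar>" using D_pos by simp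
  qed (use D_pos in simp)
  fix \<mu> d1 d2 assume "\<mu> \<in> {a..b}" "\<bar>d1 - D\<bar> \<le> r" "\<bar>d2 - D\<bar> \<le> r"
  then show "((\<lambda>m. N m d1 d2) has_real_derivative D * (1 / (D + P d2 * f1d (N \<mu> d1 d2)))) (at \<mu>)"
    unfolding N_eq_nutrient using f1.nutrient_has_derivative[OF D_pos _ conjunct2[OF P_in_box]] a_pos
    by simp
qed

lemma C1_lipschitz_at_base_f1_N: "C1_lipschitz_at_base {a..b} r D (\<lambda>\<mu> d1 d2. f1 (N \<mu> d1 d2))"
  using C1_lipschitz_at_base_comp_C2[OF C1_lipschitz_at_base_N N_in_Ioc f1_deriv f1_C3(1)
      continuous_on_nonneg_of_deriv[OF f1_C3(2)]] by blast

lemma C1_lipschitz_at_base_f1d_N: "C1_lipschitz_at_base {a..b} r D (\<lambda>\<mu> d1 d2. f1d (N \<mu> d1 d2))"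
  using C1_lipschitz_at_base_comp_C2[OF C1_lipschitz_at_base_N N_in_Ioc f1_C3] by blast

lemma C1_lipschitz_at_base_f2d_P: "C1_lipschitz_at_base {a..b} r D (\<lambda>\<mu> d1 d2. f2d (P d2))"
  using P_D(1) P_in_box
  by (intro C1_lipschitz_at_base_mu_indep
      lipschitz_at_base_comp_C1[OF lipschitz_at_base_P _ _ f2_C2, where lo = "P D / 2" and hi = "3 * P D / 2"])
    auto

lemma C1_lipschitz_at_base_g2_div_d2: "C1_lipschitz_at_base {a..b} r D (\<lambda>\<mu> d1 d2. g2 / d2)"
proof -
  have "lipschitz_at_base {a..b} r D (\<lambda>\<mu> d1 d2. 1 / d2)"
    using r_le_D D_pos
    by (intro lipschitz_at_base_inverse[OF lipschitz_at_base_d2, of "D / 2"]) auto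
  from lipschitz_at_base_mult[OF lipschitz_at_base_const this, of g2] show ?thesis
    by (intro C1_lipschitz_at_base_mu_indep) simp
qed

lemmas C1_lipschitz_at_base_intros =
  C1_lipschitz_at_base_add C1_lipschitz_at_base_diff C1_lipschitz_at_base_mult
  C1_lipschitz_at_base_uminus C1_lipschitz_at_base_f1_N C1_lipschitz_at_base_f1d_N
  C1_lipschitz_at_base_f2d_P C1_lipschitz_at_base_g2_div_d2
  C1_lipschitz_at_base_mu_indep[OF lipschitz_at_base_const]
  C1_lipschitz_at_base_mu_indep[OF lipschitz_at_base_d1]
  C1_lipschitz_at_base_mu_indep[OF lipschitz_at_base_d2]
  C1_lipschitz_at_base_mu_indep[OF lipschitz_at_base_P]

lemma C1_lipschitz_at_base_charcoeffs:
  "C1_lipschitz_at_base {a..b} r D p0" "C1_lipschitz_at_base {a..b} r D p1"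
  "C1_lipschitz_at_base {a..b} r D p2"
  unfolding p0_def[abs_def] p1_def[abs_def] p2_def[abs_def] j11_def j22_def j23j32_def
    j12j21_def Zeq_def
  by (intro C1_lipschitz_at_base_intros)+

end

definition "beta_base \<mu> = (D + P D * f1d (N \<mu> D D)) * Z \<mu> D D * f2d (P D)"
definition "disc_base \<mu> = 4 * beta_base \<mu> - (A \<mu>) ^ 2"

lemma multM_base: "multM (- D, beta_base \<mu>, A \<mu>) = (p0 \<mu> D D, p1 \<mu> D D, p2 \<mu> D D)"
  using P_D(1) D_pos g2_pos
  unfolding multM_def Afun_def beta_base_def p0_def p1_def p2_def j11_def j22_def j23j32_def
    j12j21_def Zeq_def
  by (simp add: field_simps)

lemma muc1_eq: "muc1 f1 f2 g1 g2 D D D = lam f1 g1 D + P D / g1"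
  unfolding muc1_def using D_pos by simp

lemma muc1_pos: "0 < muc1 f1 f2 g1 g2 D D D"
  using muc1_eq lam_f1_D P_D g1_pos by (simp add: add_pos_pos)

lemma N_base_gt:
  assumes "muc1 f1 f2 g1 g2 D D D < \<mu>"
  shows "lam f1 g1 D < N \<mu> D D"
proof (rule ccontr)
  assume "\<not> lam f1 g1 D < N \<mu> D D"
  then have le: "N \<mu> D D \<le> lam f1 g1 D" by simp
  have N: "0 < N \<mu> D D" "(\<mu> - N \<mu> D D) * D - P D * f1 (N \<mu> D D) = 0"
    using f1.nutrient_spec[OF D_pos _ P_D(1), of \<mu>] muc1_pos assms unfolding N_eq_nutrient by auto
  have "P D * f1 (N \<mu> D D) \<le> P D * (D / g1)"
    using f1.mono[OF _ le] N(1) lam_f1_D P_D(1) by (intro mult_left_mono) auto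
  also have "\<dots> = (P D / g1) * D" by simp
  also have "\<dots> < (\<mu> - lam f1 g1 D) * D"
    using assms muc1_eq D_pos by (intro mult_strict_right_mono) auto
  also have "\<dots> \<le> (\<mu> - N \<mu> D D) * D" using le D_pos by simp
  finally show False using N(2) by simp
qed

lemma Z_base_pos: "muc1 f1 f2 g1 g2 D D D < \<mu> \<Longrightarrow> 0 < Z \<mu> D D"
  using f1.strict_mono[OF _ N_base_gt] lam_f1_D g1_pos P_D(1) D_pos g2_pos
  unfolding Zeq_def by (simp add: field_simps)

lemma beta_base_pos:
  assumes "muc1 f1 f2 g1 g2 D D D < \<mu>" shows "0 < beta_base \<mu>"
proof -
  have "0 < N \<mu> D D" using N_base_gt[OF assms] lam_f1_D(1) by linarith
  then have "0 < f1d (N \<mu> D D)" "0 < f2d (P D)" using f1d_pos f2d_pos P_D(1) by auto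
  then show ?thesis unfolding beta_base_def
    using Z_base_pos[OF assms] P_D(1) D_pos by (intro mult_pos_pos add_pos_pos) auto
qed

lemma disc_base_pos_at_zero_of_A:
  "muc1 f1 f2 g1 g2 D D D < \<mu> \<Longrightarrow> A \<mu> = 0 \<Longrightarrow> 0 < disc_base \<mu>"
  unfolding disc_base_def using beta_base_pos by simp

lemma disc_base_eq: "disc_base \<mu> = 4 * (- p0 \<mu> D D / D) - (p2 \<mu> D D + D) ^ 2"
proof -
  have "- D * beta_base \<mu> = p0 \<mu> D D" "- D + A \<mu> = p2 \<mu> D D"
    using multM_base[of \<mu>] unfolding multM_def by auto
  then have "beta_base \<mu> = - p0 \<mu> D D / D" "A \<mu> = p2 \<mu> D D + D" using D_pos by (auto simp: field_simps)
  then show ?thesis unfolding disc_base_def by simp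
qed

lemma isCont_disc_base:
  assumes "0 < \<mu>" shows "isCont disc_base \<mu>"
proof -
  have box: "\<mu> \<in> {\<mu> / 2..\<mu> + 1}" "\<bar>D - D\<bar> \<le> min rZ (D / 2)" using rZ_spec(1) D_pos assms by auto
  have "C1_lipschitz_at_base {\<mu> / 2..\<mu> + 1} (min rZ (D / 2)) D p0"
    "C1_lipschitz_at_base {\<mu> / 2..\<mu> + 1} (min rZ (D / 2)) D p2"
    using C1_lipschitz_at_base_charcoeffs[of "\<mu> / 2" "min rZ (D / 2)" "\<mu> + 1"] assms by auto
  then have "isCont (\<lambda>m. p0 m D D) \<mu>" "isCont (\<lambda>m. p2 m D D) \<mu>"
    using C1_lipschitz_at_base_isCont box by blast+
  then have "isCont (\<lambda>m. 4 * (- p0 m D D / D) - (p2 m D D + D) ^ 2) \<mu>"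
    by (intro continuous_intros) (use D_pos in auto)
  then show ?thesis unfolding disc_base_eq[abs_def] .
qed

definition "charpoly \<mu> d1 d2 x = p0 \<mu> d1 d2 + p1 \<mu> d1 d2 * x + p2 \<mu> d1 d2 * x ^ 2 - x ^ 3"

text \<open>\<open>alpha\<close> is the real root of the characteristic polynomial near \<open>-D\<close>; \<open>beta\<close> and \<open>gamma\<close>
  are then the coefficients of the complementary quadratic factor, as in the paper.\<close>

definition "alpha \<mu> d1 d2 = (SOME x. - 3 * D / 2 \<le> x \<and> x \<le> - D / 2 \<and> charpoly \<mu> d1 d2 x = 0)"
definition "gamma \<mu> d1 d2 = p2 \<mu> d1 d2 - alpha \<mu> d1 d2"
definition "beta \<mu> d1 d2 = - p1 \<mu> d1 d2 - alpha \<mu> d1 d2 * gamma \<mu> d1 d2"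
definition "disc \<mu> d1 d2 = 4 * beta \<mu> d1 d2 - (gamma \<mu> d1 d2) ^ 2"
definition "quad_at_alpha \<mu> d1 d2 = beta \<mu> d1 d2 - gamma \<mu> d1 d2 * alpha \<mu> d1 d2 + (alpha \<mu> d1 d2) ^ 2"

lemma charpoly_base: "charpoly \<mu> D D x = (- D - x) * (beta_base \<mu> - A \<mu> * x + x ^ 2)"
  unfolding charpoly_def using multM_poly[OF multM_base] by simp

lemma multM_alpha:
  "charpoly \<mu> d1 d2 (alpha \<mu> d1 d2) = 0 \<Longrightarrow>
   multM (alpha \<mu> d1 d2, beta \<mu> d1 d2, gamma \<mu> d1 d2) = (p0 \<mu> d1 d2, p1 \<mu> d1 d2, p2 \<mu> d1 d2)"
  unfolding multM_def beta_def gamma_def charpoly_def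
  by (simp add: algebra_simps power2_eq_square power3_eq_cube)

end

section \<open>The factorization on a window of \<open>\<mu>\<close>\<close>

locale plankton_window = plankton_model +
  fixes a b \<eta> :: real
  assumes muc1_lt_a: "muc1 f1 f2 g1 g2 D D D < a"
    and disc_base_ge: "\<And>\<mu>. \<mu> \<in> {a..b} \<Longrightarrow> 2 * \<eta> \<le> disc_base \<mu>"
    and eta_pos: "0 < \<eta>"
begin

lemma a_pos: "0 < a"
  using muc1_lt_a muc1_pos by linarith

definition "r0 = min rZ (D / 2)"

lemma r0: "0 < r0" "r0 \<le> rZ" "r0 \<le> D / 2"
  unfolding r0_def using rZ_spec(1) D_pos by auto

lemmas C1_lipschitz_at_base_charcoeffs_r0 = C1_lipschitz_at_base_charcoeffs[OF a_pos r0(2,3), where b = b]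

lemma base_quadratic_ge:
  assumes "\<mu> \<in> {a..b}" shows "\<eta> / 2 \<le> beta_base \<mu> - A \<mu> * x + x ^ 2"
  using quadratic_lower_bound[of "2 * \<eta>"] disc_base_ge[OF assms] unfolding disc_base_def by simp

lemma lipschitz_at_base_charpoly:
  "lipschitz_at_base ({a..b} \<times> {- 3 * D / 2..3 * D / 2}) r0 D (\<lambda>j d1 d2. charpoly (fst j) d1 d2 (snd j))"
proof -
  have fst: "fst ` ({a..b} \<times> {- 3 * D / 2..3 * D / 2}) \<subseteq> {a..b}" by auto
  have p: "lipschitz_at_base ({a..b} \<times> {- 3 * D / 2..3 * D / 2}) r0 D (\<lambda>j. p0 (fst j))"
    "lipschitz_at_base ({a..b} \<times> {- 3 * D / 2..3 * D / 2}) r0 D (\<lambda>j. p1 (fst j))"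
    "lipschitz_at_base ({a..b} \<times> {- 3 * D / 2..3 * D / 2}) r0 D (\<lambda>j. p2 (fst j))"
    using C1_lipschitz_at_base_charcoeffs_r0[THEN C1_lipschitz_at_base_imp_lipschitz_at_base,
        THEN lipschitz_at_base_reindex, OF fst] by auto
  have "lipschitz_at_base ({a..b} \<times> {- 3 * D / 2..3 * D / 2}) r0 D (\<lambda>j d1 d2. snd j)"
    by (rule lipschitz_at_base_param[of _ _ "3 * D / 2"]) auto
  then show ?thesis unfolding charpoly_def
    by (intro lipschitz_at_base_add lipschitz_at_base_diff lipschitz_at_base_mult lipschitz_at_base_power p)
qed

text \<open>At \<open>(D, D)\<close> the cubic is \<open>\<ge> D \<eta>/4\<close> at \<open>-3D/2\<close> and \<open>\<le> -D \<eta>/4\<close> at \<open>-D/2\<close>; a perturbation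
  smaller than \<open>D \<eta>/4\<close> keeps a root in between.\<close>

lemma charpoly_root_exists:
  assumes "\<mu> \<in> {a..b}"
    and close: "\<And>x. \<bar>x\<bar> \<le> 3 * D / 2 \<Longrightarrow> \<bar>charpoly \<mu> d1 d2 x - charpoly \<mu> D D x\<bar> < D * \<eta> / 4"
  shows "\<exists>x. - 3 * D / 2 \<le> x \<and> x \<le> - D / 2 \<and> charpoly \<mu> d1 d2 x = 0"
proof -
  have W: "D / 2 * (\<eta> / 2) \<le> D / 2 * (beta_base \<mu> - A \<mu> * x + x ^ 2)" for x
    using base_quadratic_ge[OF assms(1)] D_pos by (intro mult_left_mono) auto
  have "charpoly \<mu> D D (- 3 * D / 2) = D / 2 * (beta_base \<mu> - A \<mu> * (- 3 * D / 2) + (- 3 * D / 2) ^ 2)"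
    "charpoly \<mu> D D (- D / 2) = - (D / 2 * (beta_base \<mu> - A \<mu> * (- D / 2) + (- D / 2) ^ 2))"
    unfolding charpoly_base by (simp_all add: algebra_simps)
  then have "D * \<eta> / 4 \<le> charpoly \<mu> D D (- 3 * D / 2)" "charpoly \<mu> D D (- D / 2) \<le> - (D * \<eta> / 4)"
    using W[of "- 3 * D / 2"] W[of "- D / 2"] by simp_all
  moreover have "\<bar>charpoly \<mu> d1 d2 (- 3 * D / 2) - charpoly \<mu> D D (- 3 * D / 2)\<bar> < D * \<eta> / 4"
    "\<bar>charpoly \<mu> d1 d2 (- D / 2) - charpoly \<mu> D D (- D / 2)\<bar> < D * \<eta> / 4"
    using close D_pos by auto
  ultimately have "charpoly \<mu> d1 d2 (- D / 2) \<le> 0" "0 \<le> charpoly \<mu> d1 d2 (- 3 * D / 2)" by linarith+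
  moreover have "continuous_on {- 3 * D / 2..- D / 2} (charpoly \<mu> d1 d2)"
    unfolding charpoly_def[abs_def] by (intro continuous_intros)
  ultimately show ?thesis using IVT2'[of "charpoly \<mu> d1 d2" "- D / 2" 0 "- 3 * D / 2"] D_pos by auto
qed

context
  fixes r :: real
  assumes r_pos: "0 < r" and r_le_r0: "r \<le> r0"
    and root_exists: "\<And>\<mu> d1 d2. \<mu> \<in> {a..b} \<Longrightarrow> \<bar>d1 - D\<bar> \<le> r \<Longrightarrow> \<bar>d2 - D\<bar> \<le> r \<Longrightarrow>
        \<exists>x. - 3 * D / 2 \<le> x \<and> x \<le> - D / 2 \<and> charpoly \<mu> d1 d2 x = 0"
begin

lemma alpha_spec:
  "\<mu> \<in> {a..b} \<Longrightarrow> \<bar>d1 - D\<bar> \<le> r \<Longrightarrow> \<bar>d2 - D\<bar> \<le> r \<Longrightarrow>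
   - 3 * D / 2 \<le> alpha \<mu> d1 d2 \<and> alpha \<mu> d1 d2 \<le> - D / 2 \<and> charpoly \<mu> d1 d2 (alpha \<mu> d1 d2) = 0"
  unfolding alpha_def using someI_ex[OF root_exists] .

lemma alpha_base:
  assumes "\<mu> \<in> {a..b}" shows "alpha \<mu> D D = - D"
proof -
  have "(- D - alpha \<mu> D D) * (beta_base \<mu> - A \<mu> * alpha \<mu> D D + (alpha \<mu> D D) ^ 2) = 0"
    using alpha_spec[of \<mu> D D] assms r_pos unfolding charpoly_base by simp
  moreover have "0 < beta_base \<mu> - A \<mu> * alpha \<mu> D D + (alpha \<mu> D D) ^ 2"
    using base_quadratic_ge[OF assms] eta_pos by (smt (verit) half_gt_zero)
  ultimately show ?thesis by simp
qed

lemma gamma_base: "\<mu> \<in> {a..b} \<Longrightarrow> gamma \<mu> D D = A \<mu>"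
  using alpha_base multM_base[of \<mu>] unfolding gamma_def multM_def by auto

lemma disc_base_eq_disc: "\<mu> \<in> {a..b} \<Longrightarrow> disc \<mu> D D = disc_base \<mu>"
  using alpha_base gamma_base multM_base[of \<mu>]
  unfolding disc_def beta_def disc_base_def multM_def by (auto simp: algebra_simps)

text \<open>At the root, \<open>0 = q\<^sub>d(\<alpha>)\<close> differs by \<open>O(|d - D|)\<close> from
  \<open>q\<^sub>D(\<alpha>) = -(\<alpha> + D)(\<beta>\<^sub>0 - A \<alpha> + \<alpha>\<^sup>2)\<close>, whose second factor is at least \<open>\<eta>/2\<close>.\<close>

lemma lipschitz_at_base_alpha: "lipschitz_at_base {a..b} r D alpha"
proof -
  obtain C where C: "\<And>j d1 d2. j \<in> {a..b} \<times> {- 3 * D / 2..3 * D / 2} \<Longrightarrow> \<bar>d1 - D\<bar> \<le> r0 \<Longrightarrow>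
      \<bar>d2 - D\<bar> \<le> r0 \<Longrightarrow> \<bar>charpoly (fst j) d1 d2 (snd j) - charpoly (fst j) D D (snd j)\<bar>
        \<le> C * (\<bar>d1 - D\<bar> + \<bar>d2 - D\<bar>)"
    using lipschitz_at_baseE[OF lipschitz_at_base_charpoly] by metis
  show ?thesis
  proof (rule lipschitz_at_baseI[of _ _ _ _ "3 * D / 2" "2 * C / \<eta>"])
    fix \<mu> d1 d2 assume box: "\<mu> \<in> {a..b}" "\<bar>d1 - D\<bar> \<le> r" "\<bar>d2 - D\<bar> \<le> r"
    define x where "x = alpha \<mu> d1 d2"
    have x: "- 3 * D / 2 \<le> x" "x \<le> - D / 2" "charpoly \<mu> d1 d2 x = 0"
      using alpha_spec[OF box] unfolding x_def by auto
    have "\<bar>x + D\<bar> * (\<eta> / 2) \<le> \<bar>x + D\<bar> * (beta_base \<mu> - A \<mu> * x + x ^ 2)"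
      using base_quadratic_ge[OF box(1)] by (intro mult_left_mono) auto
    also have "\<dots> = \<bar>charpoly \<mu> d1 d2 x - charpoly \<mu> D D x\<bar>"
      using x(3) base_quadratic_ge[OF box(1), of x] eta_pos unfolding charpoly_base
      by (simp add: abs_mult abs_minus_commute)
    also have "\<dots> \<le> C * (\<bar>d1 - D\<bar> + \<bar>d2 - D\<bar>)"
      using C[of "(\<mu>, x)" d1 d2] box x r_le_r0 D_pos by auto
    finally have "\<bar>x + D\<bar> \<le> 2 * C / \<eta> * (\<bar>d1 - D\<bar> + \<bar>d2 - D\<bar>)"
      using eta_pos by (simp add: field_simps)
    then show "\<bar>alpha \<mu> d1 d2\<bar> \<le> 3 * D / 2 \<and>
        \<bar>alpha \<mu> d1 d2 - alpha \<mu> D D\<bar> \<le> 2 * C / \<eta> * (\<bar>d1 - D\<bar> + \<bar>d2 - D\<bar>)"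
      using x D_pos alpha_base[OF box(1)] unfolding x_def by auto
  qed
qed

lemma lipschitz_at_base_charcoeffs_r:
  "lipschitz_at_base {a..b} r D p0" "lipschitz_at_base {a..b} r D p1" "lipschitz_at_base {a..b} r D p2"
  using C1_lipschitz_at_base_charcoeffs_r0[THEN C1_lipschitz_at_base_imp_lipschitz_at_base,
      THEN lipschitz_at_base_mono, OF r_le_r0] by auto

lemma lipschitz_at_base_disc: "lipschitz_at_base {a..b} r D disc"
  unfolding disc_def[abs_def] beta_def gamma_def
  by (intro lipschitz_at_base_add lipschitz_at_base_diff lipschitz_at_base_mult lipschitz_at_base_power
      lipschitz_at_base_uminus lipschitz_at_base_const lipschitz_at_base_alpha lipschitz_at_base_charcoeffs_r)

end

lemma factorization_radius:
  obtains r where "0 < r" "r \<le> r0"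
    "\<And>\<mu> d1 d2. \<mu> \<in> {a..b} \<Longrightarrow> \<bar>d1 - D\<bar> \<le> r \<Longrightarrow> \<bar>d2 - D\<bar> \<le> r \<Longrightarrow>
        \<exists>x. - 3 * D / 2 \<le> x \<and> x \<le> - D / 2 \<and> charpoly \<mu> d1 d2 x = 0"
    "\<And>\<mu> d1 d2. \<mu> \<in> {a..b} \<Longrightarrow> \<bar>d1 - D\<bar> \<le> r \<Longrightarrow> \<bar>d2 - D\<bar> \<le> r \<Longrightarrow> \<eta> \<le> disc \<mu> d1 d2"
proof -
  obtain r1 where r1: "0 < r1" "r1 \<le> r0"
    and close: "\<And>j d1 d2. j \<in> {a..b} \<times> {- 3 * D / 2..3 * D / 2} \<Longrightarrow> \<bar>d1 - D\<bar> \<le> r1 \<Longrightarrow>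
      \<bar>d2 - D\<bar> \<le> r1 \<Longrightarrow> \<bar>charpoly (fst j) d1 d2 (snd j) - charpoly (fst j) D D (snd j)\<bar> < D * \<eta> / 4"
    using lipschitz_at_base_close_to_base[OF lipschitz_at_base_charpoly r0(1)] D_pos eta_pos
    by (metis divide_pos_pos mult_pos_pos zero_less_numeral)
  have root1: "\<exists>x. - 3 * D / 2 \<le> x \<and> x \<le> - D / 2 \<and> charpoly \<mu> d1 d2 x = 0"
    if "\<mu> \<in> {a..b}" "\<bar>d1 - D\<bar> \<le> r1" "\<bar>d2 - D\<bar> \<le> r1" for \<mu> d1 d2
  proof (rule charpoly_root_exists[OF that(1)])
    fix x :: real assume "\<bar>x\<bar> \<le> 3 * D / 2"
    then have "(\<mu>, x) \<in> {a..b} \<times> {- 3 * D / 2..3 * D / 2}" using that(1) by auto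
    then show "\<bar>charpoly \<mu> d1 d2 x - charpoly \<mu> D D x\<bar> < D * \<eta> / 4"
      using close[of "(\<mu>, x)" d1 d2] that by auto
  qed
  obtain r2 where r2: "0 < r2" "r2 \<le> r1"
    and disc_close: "\<And>\<mu> d1 d2. \<mu> \<in> {a..b} \<Longrightarrow> \<bar>d1 - D\<bar> \<le> r2 \<Longrightarrow> \<bar>d2 - D\<bar> \<le> r2 \<Longrightarrow>
      \<bar>disc \<mu> d1 d2 - disc \<mu> D D\<bar> < \<eta>"
    using lipschitz_at_base_close_to_base[OF lipschitz_at_base_disc[OF r1 root1] r1(1) eta_pos] by blast
  show ?thesis
  proof (rule that[of r2])
    fix \<mu> d1 d2 assume box: "\<mu> \<in> {a..b}" "\<bar>d1 - D\<bar> \<le> r2" "\<bar>d2 - D\<bar> \<le> r2"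
    then show "\<exists>x. - 3 * D / 2 \<le> x \<and> x \<le> - D / 2 \<and> charpoly \<mu> d1 d2 x = 0"
      using root1 r2 by auto
    show "\<eta> \<le> disc \<mu> d1 d2"
      using disc_close[OF box] disc_base_eq_disc[OF r1 root1 box(1)] disc_base_ge[OF box(1)] by linarith
  qed (use r1 r2 in auto)
qed

context
  fixes r :: real
  assumes r_pos: "0 < r" and r_le_r0: "r \<le> r0"
    and root_exists: "\<And>\<mu> d1 d2. \<mu> \<in> {a..b} \<Longrightarrow> \<bar>d1 - D\<bar> \<le> r \<Longrightarrow> \<bar>d2 - D\<bar> \<le> r \<Longrightarrow>
        \<exists>x. - 3 * D / 2 \<le> x \<and> x \<le> - D / 2 \<and> charpoly \<mu> d1 d2 x = 0"
    and disc_ge: "\<And>\<mu> d1 d2. \<mu> \<in> {a..b} \<Longrightarrow> \<bar>d1 - D\<bar> \<le> r \<Longrightarrow> \<bar>d2 - D\<bar> \<le> r \<Longrightarrow> \<eta> \<le> disc \<mu> d1 d2"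
begin

lemma factorization:
  assumes "\<mu> \<in> {a..b}" "\<bar>d1 - D\<bar> \<le> r" "\<bar>d2 - D\<bar> \<le> r"
  shows "alpha \<mu> d1 d2 < 0" "(gamma \<mu> d1 d2) ^ 2 - 4 * beta \<mu> d1 d2 < 0"
    "multM (alpha \<mu> d1 d2, beta \<mu> d1 d2, gamma \<mu> d1 d2)
       = charcoeffs (Jac f1 f1d f2 f2d g1 g2 D d1 d2 (E2 f1 f2 g1 g2 D \<mu> d1 d2))"
proof -
  have "- 3 * D / 2 \<le> alpha \<mu> d1 d2 \<and> alpha \<mu> d1 d2 \<le> - D / 2 \<and> charpoly \<mu> d1 d2 (alpha \<mu> d1 d2) = 0"
    using alpha_spec[OF r_pos r_le_r0 root_exists assms] .
  then show "alpha \<mu> d1 d2 < 0" "multM (alpha \<mu> d1 d2, beta \<mu> d1 d2, gamma \<mu> d1 d2)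
       = charcoeffs (Jac f1 f1d f2 f2d g1 g2 D d1 d2 (E2 f1 f2 g1 g2 D \<mu> d1 d2))"
    using D_pos multM_alpha charcoeffs_at_E2[of d2 d1 \<mu>] assms(3) r_le_r0 r0(2) by auto
  show "(gamma \<mu> d1 d2) ^ 2 - 4 * beta \<mu> d1 d2 < 0"
    using disc_ge[OF assms] eta_pos unfolding disc_def by simp
qed

lemma gam_eq_gamma:
  "\<mu> \<in> {a..b} \<Longrightarrow> \<bar>d1 - D\<bar> \<le> r \<Longrightarrow> \<bar>d2 - D\<bar> \<le> r \<Longrightarrow> gam f1 f1d f2 f2d g1 g2 D d1 d2 \<mu> = gamma \<mu> d1 d2"
  unfolding gam_def using gamma_fac_eq[OF factorization] by blast

lemma A_eq_gam: "\<mu> \<in> {a..b} \<Longrightarrow> A \<mu> = gam f1 f1d f2 f2d g1 g2 D D D \<mu>"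
  using gamma_base[OF r_pos r_le_r0 root_exists] gam_eq_gamma r_pos by auto

lemma quad_at_alpha_ge:
  assumes "\<mu> \<in> {a..b}" "\<bar>d1 - D\<bar> \<le> r" "\<bar>d2 - D\<bar> \<le> r"
  shows "\<eta> / 4 \<le> quad_at_alpha \<mu> d1 d2"
  using quadratic_lower_bound[of \<eta> "beta \<mu> d1 d2" "gamma \<mu> d1 d2" "alpha \<mu> d1 d2"] disc_ge[OF assms]
  unfolding quad_at_alpha_def disc_def by simp

lemma lipschitz_at_base_quad_at_alpha: "lipschitz_at_base {a..b} r D quad_at_alpha"
  unfolding quad_at_alpha_def[abs_def] beta_def gamma_def
  by (intro lipschitz_at_base_add lipschitz_at_base_diff lipschitz_at_base_mult lipschitz_at_base_power
      lipschitz_at_base_uminus lipschitz_at_base_alpha[OF r_pos r_le_r0 root_exists]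
      lipschitz_at_base_charcoeffs_r[OF r_pos r_le_r0 root_exists])

lemma alpha_has_derivative:
  assumes "\<mu> \<in> {a<..<b}" "\<bar>d1 - D\<bar> \<le> r" "\<bar>d2 - D\<bar> \<le> r"
    and "((\<lambda>m. p0 m d1 d2) has_real_derivative p0' \<mu> d1 d2) (at \<mu>)"
      "((\<lambda>m. p1 m d1 d2) has_real_derivative p1' \<mu> d1 d2) (at \<mu>)"
      "((\<lambda>m. p2 m d1 d2) has_real_derivative p2' \<mu> d1 d2) (at \<mu>)"
  shows "((\<lambda>m. alpha m d1 d2) has_real_derivative (p0' \<mu> d1 d2 + p1' \<mu> d1 d2 * alpha \<mu> d1 d2
           + p2' \<mu> d1 d2 * (alpha \<mu> d1 d2) ^ 2) * (1 / quad_at_alpha \<mu> d1 d2)) (at \<mu>)"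
proof -
  have fac: "\<forall>x\<in>{a<..<b}. multM (alpha x d1 d2, beta x d1 d2, gamma x d1 d2)
      = (p0 x d1 d2, p1 x d1 d2, p2 x d1 d2)"
    using multM_alpha alpha_spec[OF r_pos r_le_r0 root_exists _ assms(2,3)] by auto
  have disc: "\<forall>x\<in>{a<..<b}. \<eta> \<le> 4 * beta x d1 d2 - (gamma x d1 d2)\<^sup>2"
    using disc_ge assms(2,3) unfolding disc_def by auto
  show ?thesis
    using multM_root_has_derivative[OF open_greaterThanLessThan assms(1) fac disc eta_pos assms(4-6)]
    unfolding quad_at_alpha_def by simp
qed

lemma C1_lipschitz_at_base_gamma: "C1_lipschitz_at_base {a<..<b} r D gamma"
proof -
  have sub: "{a<..<b} \<subseteq> {a..b}" by auto
  have C1p: "C1_lipschitz_at_base {a<..<b} r D p0" "C1_lipschitz_at_base {a<..<b} r D p1"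
    "C1_lipschitz_at_base {a<..<b} r D p2"
    using C1_lipschitz_at_base_subset[OF C1_lipschitz_at_base_mono[OF _ r_le_r0] sub]
      C1_lipschitz_at_base_charcoeffs_r0 by blast+
  obtain p0' where lip0: "lipschitz_at_base {a<..<b} r D p0'"
    and dp0: "\<And>\<mu> d1 d2. \<mu> \<in> {a<..<b} \<Longrightarrow> \<bar>d1 - D\<bar> \<le> r \<Longrightarrow> \<bar>d2 - D\<bar> \<le> r \<Longrightarrow>
      ((\<lambda>m. p0 m d1 d2) has_real_derivative p0' \<mu> d1 d2) (at \<mu>)"
    by (rule C1_lipschitz_at_base_derivE[OF C1p(1)]) blast
  obtain p1' where lip1: "lipschitz_at_base {a<..<b} r D p1'"
    and dp1: "\<And>\<mu> d1 d2. \<mu> \<in> {a<..<b} \<Longrightarrow> \<bar>d1 - D\<bar> \<le> r \<Longrightarrow> \<bar>d2 - D\<bar> \<le> r \<Longrightarrow>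
      ((\<lambda>m. p1 m d1 d2) has_real_derivative p1' \<mu> d1 d2) (at \<mu>)"
    by (rule C1_lipschitz_at_base_derivE[OF C1p(2)]) blast
  obtain p2' where lip2: "lipschitz_at_base {a<..<b} r D p2'"
    and dp2: "\<And>\<mu> d1 d2. \<mu> \<in> {a<..<b} \<Longrightarrow> \<bar>d1 - D\<bar> \<le> r \<Longrightarrow> \<bar>d2 - D\<bar> \<le> r \<Longrightarrow>
      ((\<lambda>m. p2 m d1 d2) has_real_derivative p2' \<mu> d1 d2) (at \<mu>)"
    by (rule C1_lipschitz_at_base_derivE[OF C1p(3)]) blast
  have "C1_lipschitz_at_base {a<..<b} r D alpha"
  proof (rule C1_lipschitz_at_baseI)
    show "lipschitz_at_base {a<..<b} r D (\<lambda>\<mu> d1 d2. (p0' \<mu> d1 d2 + p1' \<mu> d1 d2 * alpha \<mu> d1 d2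
           + p2' \<mu> d1 d2 * (alpha \<mu> d1 d2) ^ 2) * (1 / quad_at_alpha \<mu> d1 d2))"
    proof (intro lipschitz_at_base_add lipschitz_at_base_mult lipschitz_at_base_power lip0 lip1 lip2
          lipschitz_at_base_subset[OF lipschitz_at_base_alpha[OF r_pos r_le_r0 root_exists] sub]
          lipschitz_at_base_inverse[OF lipschitz_at_base_subset[OF lipschitz_at_base_quad_at_alpha sub]])
      fix \<mu> d1 d2 assume "\<mu> \<in> {a<..<b}" "\<bar>d1 - D\<bar> \<le> r" "\<bar>d2 - D\<bar> \<le> r"
      then show "\<eta> / 4 \<le> \<bar>quad_at_alpha \<mu> d1 d2\<bar>" using quad_at_alpha_ge[of \<mu> d1 d2] by auto
    qed (use eta_pos in auto)
    show "lipschitz_at_base {a<..<b} r D alpha"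
      using lipschitz_at_base_subset[OF lipschitz_at_base_alpha[OF r_pos r_le_r0 root_exists] sub] .
    fix \<mu> d1 d2 assume box: "\<mu> \<in> {a<..<b}" "\<bar>d1 - D\<bar> \<le> r" "\<bar>d2 - D\<bar> \<le> r"
    show "((\<lambda>m. alpha m d1 d2) has_real_derivative (p0' \<mu> d1 d2 + p1' \<mu> d1 d2 * alpha \<mu> d1 d2
           + p2' \<mu> d1 d2 * (alpha \<mu> d1 d2) ^ 2) * (1 / quad_at_alpha \<mu> d1 d2)) (at \<mu>)"
      using alpha_has_derivative[where p0' = p0' and p1' = p1' and p2' = p2', OF box dp0[OF box] dp1[OF box] dp2[OF box]] .
  qed
  then show ?thesis unfolding gamma_def[abs_def] using C1_lipschitz_at_base_diff C1p(3) by blast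
qed
end

lemma gam_deriv_lipschitz:
  obtains r C where "0 < r"
    "\<And>\<mu> d1 d2. \<mu> \<in> {a<..<b} \<Longrightarrow> \<bar>d1 - D\<bar> \<le> r \<Longrightarrow> \<bar>d2 - D\<bar> \<le> r \<Longrightarrow>
      (\<exists>\<alpha> \<beta> \<gamma>. \<alpha> < 0 \<and> \<gamma> ^ 2 - 4 * \<beta> < 0 \<and>
          multM (\<alpha>, \<beta>, \<gamma>) = charcoeffs (Jac f1 f1d f2 f2d g1 g2 D d1 d2 (E2 f1 f2 g1 g2 D \<mu> d1 d2))) \<and>
      (\<lambda>m. gam f1 f1d f2 f2d g1 g2 D d1 d2 m) differentiable (at \<mu>) \<and>
      \<bar>deriv (\<lambda>m. gam f1 f1d f2 f2d g1 g2 D d1 d2 m) \<mu> - deriv A \<mu>\<bar> \<le> C * (\<bar>d1 - D\<bar> + \<bar>d2 - D\<bar>)"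
proof -
  obtain r where r: "0 < r" "r \<le> r0"
    and root: "\<And>\<mu> d1 d2. \<mu> \<in> {a..b} \<Longrightarrow> \<bar>d1 - D\<bar> \<le> r \<Longrightarrow> \<bar>d2 - D\<bar> \<le> r \<Longrightarrow>
        \<exists>x. - 3 * D / 2 \<le> x \<and> x \<le> - D / 2 \<and> charpoly \<mu> d1 d2 x = 0"
    and disc: "\<And>\<mu> d1 d2. \<mu> \<in> {a..b} \<Longrightarrow> \<bar>d1 - D\<bar> \<le> r \<Longrightarrow> \<bar>d2 - D\<bar> \<le> r \<Longrightarrow> \<eta> \<le> disc \<mu> d1 d2"
    using factorization_radius by blast
  note ctx = r root disc
  obtain G' where lipG': "lipschitz_at_base {a<..<b} r D G'"
    and dG: "\<And>\<mu> d1 d2. \<mu> \<in> {a<..<b} \<Longrightarrow> \<bar>d1 - D\<bar> \<le> r \<Longrightarrow> \<bar>d2 - D\<bar> \<le> r \<Longrightarrow>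
      ((\<lambda>m. gamma m d1 d2) has_real_derivative G' \<mu> d1 d2) (at \<mu>)"
    using C1_lipschitz_at_base_gamma[OF ctx] unfolding C1_lipschitz_at_base_def by blast
  obtain C where C: "\<And>\<mu> d1 d2. \<mu> \<in> {a<..<b} \<Longrightarrow> \<bar>d1 - D\<bar> \<le> r \<Longrightarrow> \<bar>d2 - D\<bar> \<le> r \<Longrightarrow>
      \<bar>G' \<mu> d1 d2 - G' \<mu> D D\<bar> \<le> C * (\<bar>d1 - D\<bar> + \<bar>d2 - D\<bar>)"
    using lipG' unfolding lipschitz_at_base_def by blast
  have dgam: "((\<lambda>m. gam f1 f1d f2 f2d g1 g2 D d1 d2 m) has_real_derivative G' \<mu> d1 d2) (at \<mu>)"
    if "\<mu> \<in> {a<..<b}" "\<bar>d1 - D\<bar> \<le> r" "\<bar>d2 - D\<bar> \<le> r" for \<mu> d1 d2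
    by (rule has_field_derivative_transform_within_open[OF dG[OF that], where S = "{a<..<b}"])
       (use that gam_eq_gamma[OF ctx] in auto)
  have dA: "(A has_real_derivative G' \<mu> D D) (at \<mu>)" if "\<mu> \<in> {a<..<b}" for \<mu>
    by (rule has_field_derivative_transform_within_open[OF dgam[OF that], where S = "{a<..<b}"])
       (use that A_eq_gam[OF ctx] r in auto)
  show ?thesis
  proof (rule that[OF r(1)], intro conjI)
    fix \<mu> d1 d2 assume box: "\<mu> \<in> {a<..<b}" "\<bar>d1 - D\<bar> \<le> r" "\<bar>d2 - D\<bar> \<le> r"
    show "\<exists>\<alpha> \<beta> \<gamma>. \<alpha> < 0 \<and> \<gamma> ^ 2 - 4 * \<beta> < 0 \<and>
        multM (\<alpha>, \<beta>, \<gamma>) = charcoeffs (Jac f1 f1d f2 f2d g1 g2 D d1 d2 (E2 f1 f2 g1 g2 D \<mu> d1 d2))"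
      using factorization[OF ctx, of \<mu> d1 d2] box by auto
    show "(\<lambda>m. gam f1 f1d f2 f2d g1 g2 D d1 d2 m) differentiable (at \<mu>)"
      using dgam[OF box] real_differentiable_def by blast
    show "\<bar>deriv (\<lambda>m. gam f1 f1d f2 f2d g1 g2 D d1 d2 m) \<mu> - deriv A \<mu>\<bar> \<le> C * (\<bar>d1 - D\<bar> + \<bar>d2 - D\<bar>)"
      using DERIV_imp_deriv[OF dgam[OF box]] DERIV_imp_deriv[OF dA[OF box(1)]] C[OF box] by simp
  qed
qed

end

lemma abs_diff_add_le_norm_Pair:
  fixes x1 x2 y1 y2 :: real
  shows "\<bar>x1 - y1\<bar> + \<bar>x2 - y2\<bar> \<le> 2 * norm ((x1, x2) - (y1, y2))"
  using norm_fst_le[where x = "x1 - y1" and y = "x2 - y2"] norm_snd_le[where x = "x1 - y1" and y = "x2 - y2"]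
  by simp

context plankton_model
begin

lemma plankton_window_around:
  assumes "muc1 f1 f2 g1 g2 D D D < muc2" "A muc2 = 0"
  obtains \<delta> where "0 < \<delta>"
    "plankton_window f1 f1d f1dd f1ddd f2 f2d f2dd D g1 g2 (muc2 - 2 * \<delta>) (muc2 + 2 * \<delta>) (disc_base muc2 / 4)"
proof -
  have pos: "0 < disc_base muc2" using disc_base_pos_at_zero_of_A[OF assms] .
  have "isCont disc_base muc2" using isCont_disc_base assms(1) muc1_pos by simp
  then obtain e where "0 < e"
    and e: "\<forall>\<mu>. dist \<mu> muc2 < e \<longrightarrow> dist (disc_base \<mu>) (disc_base muc2) < disc_base muc2 / 2"
    using pos unfolding continuous_at_eps_delta by (meson half_gt_zero)
  define \<delta> where "\<delta> = min e (muc2 - muc1 f1 f2 g1 g2 D D D) / 3"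
  show ?thesis
  proof (rule that[of \<delta>], unfold_locales)
    show "0 < \<delta>" "0 < disc_base muc2 / 4" unfolding \<delta>_def using \<open>0 < e\<close> assms(1) pos by auto
    have "min e (muc2 - muc1 f1 f2 g1 g2 D D D) \<le> muc2 - muc1 f1 f2 g1 g2 D D D" by simp
    then show "muc1 f1 f2 g1 g2 D D D < muc2 - 2 * \<delta>" unfolding \<delta>_def using assms(1) by argo
  next
    fix \<mu> assume "\<mu> \<in> {muc2 - 2 * \<delta>..muc2 + 2 * \<delta>}"
    moreover have "min e (muc2 - muc1 f1 f2 g1 g2 D D D) \<le> e" by simp
    ultimately have "\<bar>\<mu> - muc2\<bar> < e" unfolding \<delta>_def using \<open>0 < e\<close> by (simp add: abs_less_iff) argo
    then have "\<bar>disc_base \<mu> - disc_base muc2\<bar> < disc_base muc2 / 2" using e by (simp add: dist_real_def)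
    then show "2 * (disc_base muc2 / 4) \<le> disc_base \<mu>" by linarith
  qed
qed

theorem gam_deriv_close_to_A_deriv:
  assumes "muc1 f1 f2 g1 g2 D D D < muc2" "A muc2 = 0"
  shows "\<exists>\<delta>>0. \<exists>\<Delta> :: (real \<times> real) set. open \<Delta> \<and> (D, D) \<in> \<Delta> \<and>
           (\<exists>C. \<forall>mu \<in> {muc2 - \<delta> .. muc2 + \<delta>}. \<forall>D1 D2. (D1, D2) \<in> \<Delta> \<longrightarrow>
              (\<exists>a b c. a < 0 \<and> c ^ 2 - 4 * b < 0 \<and>
                  multM (a, b, c) = charcoeffs (Jac f1 f1d f2 f2d g1 g2 D D1 D2
                                                   (E2 f1 f2 g1 g2 D mu D1 D2))) \<and>
              (\<lambda>m. gam f1 f1d f2 f2d g1 g2 D D1 D2 m) differentiable (at mu) \<and>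
              \<bar>deriv (\<lambda>m. gam f1 f1d f2 f2d g1 g2 D D1 D2 m) mu
                 - deriv A mu\<bar>
                \<le> C * norm ((D1, D2) - (D, D)))"
proof -
  obtain \<delta> where "0 < \<delta>" and window: "plankton_window f1 f1d f1dd f1ddd f2 f2d f2dd D g1 g2
      (muc2 - 2 * \<delta>) (muc2 + 2 * \<delta>) (disc_base muc2 / 4)"
    using plankton_window_around[OF assms] by blast
  obtain r C where "0 < r" and estimate: "\<And>\<mu> d1 d2. \<mu> \<in> {muc2 - 2 * \<delta><..<muc2 + 2 * \<delta>} \<Longrightarrow>
      \<bar>d1 - D\<bar> \<le> r \<Longrightarrow> \<bar>d2 - D\<bar> \<le> r \<Longrightarrow>
      (\<exists>\<alpha> \<beta> \<gamma>. \<alpha> < 0 \<and> \<gamma> ^ 2 - 4 * \<beta> < 0 \<and>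
          multM (\<alpha>, \<beta>, \<gamma>) = charcoeffs (Jac f1 f1d f2 f2d g1 g2 D d1 d2 (E2 f1 f2 g1 g2 D \<mu> d1 d2))) \<and>
      (\<lambda>m. gam f1 f1d f2 f2d g1 g2 D d1 d2 m) differentiable (at \<mu>) \<and>
      \<bar>deriv (\<lambda>m. gam f1 f1d f2 f2d g1 g2 D d1 d2 m) \<mu> - deriv A \<mu>\<bar> \<le> C * (\<bar>d1 - D\<bar> + \<bar>d2 - D\<bar>)"
    by (rule plankton_window.gam_deriv_lipschitz[OF window]) blast
  define \<Delta> where "\<Delta> = {D - r<..<D + r} \<times> {D - r<..<D + r}"
  have "open \<Delta>" "(D, D) \<in> \<Delta>" unfolding \<Delta>_def using \<open>0 < r\<close> by (auto intro: open_Times)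
  moreover have "\<forall>mu \<in> {muc2 - \<delta> .. muc2 + \<delta>}. \<forall>D1 D2. (D1, D2) \<in> \<Delta> \<longrightarrow>
      (\<exists>a b c. a < 0 \<and> c ^ 2 - 4 * b < 0 \<and>
          multM (a, b, c) = charcoeffs (Jac f1 f1d f2 f2d g1 g2 D D1 D2 (E2 f1 f2 g1 g2 D mu D1 D2))) \<and>
      (\<lambda>m. gam f1 f1d f2 f2d g1 g2 D D1 D2 m) differentiable (at mu) \<and>
      \<bar>deriv (\<lambda>m. gam f1 f1d f2 f2d g1 g2 D D1 D2 m) mu - deriv A mu\<bar>
        \<le> (2 * \<bar>C\<bar>) * norm ((D1, D2) - (D, D))"
  proof (intro ballI allI impI)
    fix mu D1 D2 assume "mu \<in> {muc2 - \<delta> .. muc2 + \<delta>}" "(D1, D2) \<in> \<Delta>"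
    then have box: "mu \<in> {muc2 - 2 * \<delta><..<muc2 + 2 * \<delta>}" "\<bar>D1 - D\<bar> \<le> r" "\<bar>D2 - D\<bar> \<le> r"
      using \<open>0 < \<delta>\<close> unfolding \<Delta>_def by auto
    have "C * (\<bar>D1 - D\<bar> + \<bar>D2 - D\<bar>) \<le> \<bar>C\<bar> * (\<bar>D1 - D\<bar> + \<bar>D2 - D\<bar>)"
      by (intro mult_right_mono) auto
    also have "\<dots> \<le> \<bar>C\<bar> * (2 * norm ((D1, D2) - (D, D)))"
      using abs_diff_add_le_norm_Pair[of D1 D D2 D] by (intro mult_left_mono) auto
    finally have "C * (\<bar>D1 - D\<bar> + \<bar>D2 - D\<bar>) \<le> 2 * \<bar>C\<bar> * norm ((D1, D2) - (D, D))" by simp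
    then show "(\<exists>a b c. a < 0 \<and> c ^ 2 - 4 * b < 0 \<and>
          multM (a, b, c) = charcoeffs (Jac f1 f1d f2 f2d g1 g2 D D1 D2 (E2 f1 f2 g1 g2 D mu D1 D2))) \<and>
      (\<lambda>m. gam f1 f1d f2 f2d g1 g2 D D1 D2 m) differentiable (at mu) \<and>
      \<bar>deriv (\<lambda>m. gam f1 f1d f2 f2d g1 g2 D D1 D2 m) mu - deriv A mu\<bar>
        \<le> (2 * \<bar>C\<bar>) * norm ((D1, D2) - (D, D))"
      using estimate[OF box] by auto
  qed
  ultimately show ?thesis using \<open>0 < \<delta>\<close> by blast
qed

end

theorem lemma3p7:
  fixes f1 f1d f1dd f1ddd f2 f2d f2dd :: "real \<Rightarrow> real"
    and D g1 g2 muc2 :: real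
  assumes D_pos: "D > 0" and g1_pos: "g1 > 0" and g2_pos: "g2 > 0"
    and f1_nonneg: "\<forall>x\<ge>0. f1 x \<ge> 0" and f2_nonneg: "\<forall>x\<ge>0. f2 x \<ge> 0"
    and f1_bdd: "bounded (f1 ` {0..})" and f2_bdd: "bounded (f2 ` {0..})"
    and f1_0: "f1 0 = 0" and f2_0: "f2 0 = 0"
    and f1_deriv: "\<forall>x\<ge>0. (f1 has_real_derivative f1d x) (at x within {0..})"
    and f2_deriv: "\<forall>x\<ge>0. (f2 has_real_derivative f2d x) (at x within {0..})"
    and f1d_pos: "\<forall>x\<ge>0. f1d x > 0" and f2d_pos: "\<forall>x\<ge>0. f2d x > 0"
    and f1_lim: "\<exists>L1. (f1 \<longlongrightarrow> L1) at_top \<and>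
                   (\<exists>e>0. \<forall>d. \<bar>d - D\<bar> < e \<longrightarrow> L1 > d / g1)"
    and f2_lim: "\<exists>L2. (f2 \<longlongrightarrow> L2) at_top \<and>
                   (\<exists>e>0. \<forall>d. \<bar>d - D\<bar> < e \<longrightarrow> L2 > d / g2)"
    and f1_C3: "\<forall>x\<ge>0. (f1d has_real_derivative f1dd x) (at x within {0..})"
               "\<forall>x\<ge>0. (f1dd has_real_derivative f1ddd x) (at x within {0..})"
               "continuous_on {0..} f1ddd"
    and f2_C2: "\<forall>x\<ge>0. (f2d has_real_derivative f2dd x) (at x within {0..})"
               "continuous_on {0..} f2dd"
    and hyp: "D / (g2 * lam f2 g2 D) > f2d (lam f2 g2 D)"
    and muc2_gt: "muc2 > muc1 f1 f2 g1 g2 D D D"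
    and muc2_zero: "Afun f1 f1d f2 f2d g1 g2 D muc2 = 0"
  shows "\<exists>\<delta>>0. \<exists>\<Delta> :: (real \<times> real) set. open \<Delta> \<and> (D, D) \<in> \<Delta> \<and>
           (\<exists>C. \<forall>mu \<in> {muc2 - \<delta> .. muc2 + \<delta>}. \<forall>D1 D2. (D1, D2) \<in> \<Delta> \<longrightarrow>
              (\<exists>a b c. a < 0 \<and> c ^ 2 - 4 * b < 0 \<and>
                  multM (a, b, c) = charcoeffs (Jac f1 f1d f2 f2d g1 g2 D D1 D2
                                                   (E2 f1 f2 g1 g2 D mu D1 D2))) \<and>
              (\<lambda>m. gam f1 f1d f2 f2d g1 g2 D D1 D2 m) differentiable (at mu) \<and>
              \<bar>deriv (\<lambda>m. gam f1 f1d f2 f2d g1 g2 D D1 D2 m) mu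
                 - deriv (Afun f1 f1d f2 f2d g1 g2 D) mu\<bar>
                \<le> C * norm ((D1, D2) - (D, D)))"
proof -
  interpret plankton_model f1 f1d f1dd f1ddd f2 f2d f2dd D g1 g2
    using D_pos g1_pos g2_pos f1_0 f2_0 f1_deriv f2_deriv f1d_pos f2d_pos f1_lim f2_lim f1_C3 f2_C2
    by unfold_locales
  show ?thesis using gam_deriv_close_to_A_deriv[OF muc2_gt muc2_zero] .
qed

end
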